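(* Let $\mathbf K_t^\pm$, $a_t^\pm$, $b_t^\pm$ ($t=0,\dots,T$) be defined by the backward recursion: $a_T^\pm=b_T^\pm=0$; for $t<T$, $\mathbf K_t^\pm\in\arg\min_{\mathbb R^n}F_t^\pm$ and $a_t^+=\rho_{t+1}\mathbb E[\mathbf P_t]'\mathbf K_t^++\mathbb E[a_{t+1}^+Z_t^+1_{\{Z_t^+\ge0\}}]+\mathbb E[a_{t+1}^-Z_t^+1_{\{Z_t^+<0\}}]$, $a_t^-=\rho_{t+1}\mathbb E[\mathbf P_t]'\mathbf K_t^-+\mathbb E[a_{t+1}^+Z_t^-1_{\{Z_t^-\le0\}}]+\mathbb E[a_{t+1}^-Z_t^-1_{\{Z_t^->0\}}]$, $b_t^+=\rho_{t+1}^2(\mathbf K_t^+)'\mathbb E[\mathbf P_t\mathbf P_t']\mathbf K_t^++2\rho_{t+1}\mathbb E[a_{t+1}^+Z_t^+\mathbf P_t'\mathbf K_t^+1_{\{Z_t^+\ge0\}}]+2\rho_{t+1}\mathbb E[a_{t+1}^-Z_t^+\mathbf P_t'\mathbf K_t^+1_{\{Z_t^+<0\}}]+\mathbb E[b_{t+1}^+(Z_t^+)^21_{\{Z_t^+\ge0\}}]+\mathbb E[b_{t+1}^-(Z_t^+)^21_{\{Z_t^+<0\}}]$, $b_t^-=\rho_{t+1}^2(\mathbf K_t^-)'\mathbb E[\mathbf P_t\mathbf P_t']\mathbf K_t^-+2\rho_{t+1}\mathbb E[a_{t+1}^+Z_t^-\mathbf P_t'\mathbf K_t^-1_{\{Z_t^-\le0\}}]+2\rho_{t+1}\mathbb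 E[a_{t+1}^-Z_t^-\mathbf P_t'\mathbf K_t^-1_{\{Z_t^->0\}}]+\mathbb E[b_{t+1}^+(Z_t^-)^21_{\{Z_t^-\le0\}}]+\mathbb E[b_{t+1}^-(Z_t^-)^21_{\{Z_t^->0\}}]$, with $Z_t^\pm=s_t+\mathbf P_t'\mathbf K_t^\pm$. Let $Y_t=X_t-\rho_t^{-1}W$ and let the policy be $\mathbf u_j=\mathbf K_j^+Y_j1_{\{Y_j\ge0\}}+\mathbf K_j^-Y_j1_{\{Y_j<0\}}$ for $j=t,\dots,T-1$. Then for every $t\in\{0,\dots,T\}$, $$\mathbb E[Y_T\mid Y_t]=\rho_tY_t+a_t^+Y_t1_{\{Y_t\ge0\}}+a_t^-Y_t1_{\{Y_t<0\}},$$ $$\mathbb E[Y_T^2\mid Y_t]=\rho_t^2Y_t^2+(2\rho_ta_t^++b_t^+)Y_t^21_{\{Y_t\ge0\}}+(2\rho_ta_t^-+b_t^-)Y_t^21_{\{Y_t<0\}},$$ and consequently $\mathrm{Var}(X_T\mid X_t)=\big[(b_t^+-(a_t^+)^2)1_{\{Y_t\ge0\}}+(b_t^--(a_t^-)^2)1_{\{Y_t<0\}}\big]Y_t^2$.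
   Context: Market: $T$ periods, one risk-free asset with deterministic gross return $s_t>1$ in period $t$, and $n$ risky assets with random gross return vector $\mathbf e_t$ in period $t$. The excess return vector is $\mathbf P_t=\mathbf e_t-s_t\mathbf 1\in\mathbb R^n$. The vectors $\mathbf P_0,\dots,\mathbf P_{T-1}$ are statistically independent, absolutely continuous, with finite first and second moments, and each covariance matrix $\mathrm{Cov}(\mathbf P_t)=\mathbb E[\mathbf P_t\mathbf P_t']-\mathbb E[\mathbf P_t]\mathbb E[\mathbf P_t]'$ is positive definite. The market is arbitrage-free; in particular, for every nonzero $\mathbf L\in\mathbb R^n$, neither $\mathbf P_t'\mathbf L\le 0$ a.s. nor $\mathbf P_t'\mathbf L\ge 0$ a.s. holds. Write $\rho_t=\prod_{j=t}^{T-1}s_j$ for $t<T$ and $\rho_T=1$. Wealth dynamics: $X_{t+1}=s_tX_t+\mathbf P_t'\mathbf u_t$, with $W\in\mathbb R$ a fixed investment target; then $Y_{t+1}=s_tY_t+\mathbf P_t'\mathbf u_t$. Definition of $F_t^\pm:\mathbb R^n\to\mathbb R$, given deterministic numbers $a_{t+1}^\pm,b_{t+1}^\pm$ and constants $\gamma_t^\pm\ge0$, writing $Z=s_t+\mathbf P_t'\mathbf K$: $$F_t^+(\mathbf K)=\rho_{t+1}^2\mathbf K'\mathrm{Cov}(\mathbf P_t)\mathbf K+\mathbb E\big[(2\rho_{t+1}a_{t+1}^++b_{t+1}^+)Z^21_{\{Z\ge0\}}\big]+\mathbb E\big[(2\rho_{t+1}a_{t+1}^-+b_{t+1}^-)Z^21_{\{Z<0\}}\big]-M_+^2-2\rho_{t+1}M_+\,(s_t+\mathbb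 E[\mathbf P_t]'\mathbf K)-\gamma_t^+M_+-\rho_{t+1}\gamma_t^+(s_t+\mathbb E[\mathbf P_t]'\mathbf K),$$ where $M_+=\mathbb E[a_{t+1}^+Z1_{\{Z\ge0\}}]+\mathbb E[a_{t+1}^-Z1_{\{Z<0\}}]$; and $$F_t^-(\mathbf K)=\rho_{t+1}^2\mathbf K'\mathrm{Cov}(\mathbf P_t)\mathbf K+\mathbb E\big[(2\rho_{t+1}a_{t+1}^++b_{t+1}^+)Z^21_{\{Z\le0\}}\big]+\mathbb E\big[(2\rho_{t+1}a_{t+1}^-+b_{t+1}^-)Z^21_{\{Z>0\}}\big]-M_-^2-2\rho_{t+1}M_-\,(s_t+\mathbb E[\mathbf P_t]'\mathbf K)+\gamma_t^-M_-+\rho_{t+1}\gamma_t^-(s_t+\mathbb E[\mathbf P_t]'\mathbf K),$$ where $M_-=\mathbb E[a_{t+1}^+Z1_{\{Z\le0\}}]+\mathbb E[a_{t+1}^-Z1_{\{Z>0\}}]$. *)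

theory Defs
  imports "HOL-Probability.Probability"
begin

definition mean_vec :: "'a measure \<Rightarrow> ('a \<Rightarrow> real^'n) \<Rightarrow> real^'n" where
  "mean_vec M P = (\<chi> i. integral\<^sup>L M (\<lambda>\<omega>. P \<omega> $ i))"

definition smom_mat :: "'a measure \<Rightarrow> ('a \<Rightarrow> real^'n) \<Rightarrow> real^'n^'n" where
  "smom_mat M P = (\<chi> i j. integral\<^sup>L M (\<lambda>\<omega>. P \<omega> $ i * P \<omega> $ j))"

definition cov_mat :: "'a measure \<Rightarrow> ('a \<Rightarrow> real^'n) \<Rightarrow> real^'n^'n" where
  "cov_mat M P = (\<chi> i j. integral\<^sup>L M (\<lambda>\<omega>. P \<omega> $ i * P \<omega> $ j)
                       - integral\<^sup>L M (\<lambda>\<omega>. P \<omega> $ i) * integral\<^sup>L M (\<lambda>\<omega>. P \<omega> $ j))"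

text \<open>Arguments: probability space M, excess return Pt = P_t,
  st = s_t, r = rho_{t+1}, ap1 = a_{t+1}^+, am1 = a_{t+1}^-, bp1 = b_{t+1}^+, bm1 = b_{t+1}^-,
  g = gamma_t^{+/-}, K the argument.\<close>

definition F_plus :: "'a measure \<Rightarrow> ('a \<Rightarrow> real^'n) \<Rightarrow> real \<Rightarrow> real \<Rightarrow> real \<Rightarrow> real
    \<Rightarrow> real \<Rightarrow> real \<Rightarrow> real \<Rightarrow> real^'n \<Rightarrow> real" where
  "F_plus M Pt st r ap1 am1 bp1 bm1 g K =
    (let Z = (\<lambda>\<omega>. st + Pt \<omega> \<bullet> K);
         Mp = integral\<^sup>L M (\<lambda>\<omega>. ap1 * Z \<omega> * (if Z \<omega> \<ge> 0 then 1 else 0))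
            + integral\<^sup>L M (\<lambda>\<omega>. am1 * Z \<omega> * (if Z \<omega> < 0 then 1 else 0));
         m = st + mean_vec M Pt \<bullet> K
     in r\<^sup>2 * (K \<bullet> (cov_mat M Pt *v K))
        + integral\<^sup>L M (\<lambda>\<omega>. (2 * r * ap1 + bp1) * (Z \<omega>)\<^sup>2 * (if Z \<omega> \<ge> 0 then 1 else 0))
        + integral\<^sup>L M (\<lambda>\<omega>. (2 * r * am1 + bm1) * (Z \<omega>)\<^sup>2 * (if Z \<omega> < 0 then 1 else 0))
        - Mp\<^sup>2 - 2 * r * Mp * m - g * Mp - r * g * m)"

definition F_minus :: "'a measure \<Rightarrow> ('a \<Rightarrow> real^'n) \<Rightarrow> real \<Rightarrow> real \<Rightarrow> real \<Rightarrow> real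
    \<Rightarrow> real \<Rightarrow> real \<Rightarrow> real \<Rightarrow> real^'n \<Rightarrow> real" where
  "F_minus M Pt st r ap1 am1 bp1 bm1 g K =
    (let Z = (\<lambda>\<omega>. st + Pt \<omega> \<bullet> K);
         Mm = integral\<^sup>L M (\<lambda>\<omega>. ap1 * Z \<omega> * (if Z \<omega> \<le> 0 then 1 else 0))
            + integral\<^sup>L M (\<lambda>\<omega>. am1 * Z \<omega> * (if Z \<omega> > 0 then 1 else 0));
         m = st + mean_vec M Pt \<bullet> K
     in r\<^sup>2 * (K \<bullet> (cov_mat M Pt *v K))
        + integral\<^sup>L M (\<lambda>\<omega>. (2 * r * ap1 + bp1) * (Z \<omega>)\<^sup>2 * (if Z \<omega> \<le> 0 then 1 else 0))
        + integral\<^sup>L M (\<lambda>\<omega>. (2 * r * am1 + bm1) * (Z \<omega>)\<^sup>2 * (if Z \<omega> > 0 then 1 else 0))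
        - Mm\<^sup>2 - 2 * r * Mm * m + g * Mm + r * g * m)"

definition cond_var :: "'a measure \<Rightarrow> 'a measure \<Rightarrow> ('a \<Rightarrow> real) \<Rightarrow> 'a \<Rightarrow> real" where
  "cond_var M F f = (\<lambda>\<omega>. real_cond_exp M F (\<lambda>x. (f x)\<^sup>2) \<omega> - (real_cond_exp M F f \<omega>)\<^sup>2)"

end

theory Submission
  imports Defs
begin

(* For k >= t the policy u_k = K_k^(+-) Y_k, with the gain chosen by
   the sign of Y_k, makes the deviation multiplicative: Y_(k+1) = Y_k * (s_k + P_k . K_k^(+-)).
   Hence Y_T = terminal t Y_t (P_t, ..., P_(T-1)) for an explicit closed-loop map "terminal".

   1. One-period identities (cmean_step, csecond_step): averaging the candidate moment functions
      cmean (k+1) and csecond (k+1) over the return P_k reproduces cmean k and csecond k.  This is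
      precisely what the recursions for a_k^(+-) and b_k^(+-) encode.
   2. A freezing lemma for independent random variables (indep_var_freeze) and backward induction
      give E[terminal k y P] = cmean k y and E[(terminal k y P)^2] = csecond k y (terminal_moments).
   3. Y_t is a measurable function of P_0, ..., P_(t-1), independent of P_t, ..., P_(T-1); freezing
      once more identifies E[g(Y_T) | Y_t] with y |-> E[g(terminal t y P)] evaluated at y = Y_t.
   4. Shifting by the target W changes neither sigma(Y_t) nor conditional variances, which gives
      the variance formula. *)

lemma integrable_bounded_factor:
  fixes f e :: "'b \<Rightarrow> real"
  assumes f: "integrable N f" and e: "e \<in> borel_measurable N" and bound: "\<And>x. \<bar>e x\<bar> \<le> 1"
  shows "integrable N (\<lambda>x. f x * e x)"
  using f
proof (rule Bochner_Integration.integrable_bound)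
  show "(\<lambda>x. f x * e x) \<in> borel_measurable N"
    using borel_measurable_integrable[OF f] e by measurable
  show "AE x in N. norm (f x * e x) \<le> norm (f x)"
    using bound by (intro AE_I2) (simp add: abs_mult mult_left_le)
qed

text \<open>Adding a constant does not change the generated \<open>\<sigma>\<close>-algebra; this identifies \<open>\<sigma>(X\<^sub>t)\<close> with \<open>\<sigma>(Y\<^sub>t)\<close>.\<close>
lemma vimage_algebra_add_const:
  fixes f :: "'b \<Rightarrow> real"
  shows "vimage_algebra S (\<lambda>x. f x + c) borel = vimage_algebra S f borel"
proof -
  have shift: "(\<lambda>y::real. y + d) -` A \<in> sets borel" if "A \<in> sets borel" for A d
    using measurable_sets[OF _ that, of "\<lambda>y::real. y + d" borel] by simp
  have "{(\<lambda>x. f x + c) -` A \<inter> S |A. A \<in> sets borel} = {f -` A \<inter> S |A. A \<in> sets borel}"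
  proof (intro set_eqI iffI)
    fix U assume "U \<in> {(\<lambda>x. f x + c) -` A \<inter> S |A. A \<in> sets borel}"
    then obtain A where A: "A \<in> sets borel" and U: "U = f -` ((\<lambda>y. y + c) -` A) \<inter> S" by auto
    show "U \<in> {f -` A \<inter> S |A. A \<in> sets borel}" using U shift[OF A] by blast
  next
    fix U assume "U \<in> {f -` A \<inter> S |A. A \<in> sets borel}"
    then obtain A where A: "A \<in> sets borel" and "U = f -` A \<inter> S" by auto
    then have U: "U = (\<lambda>x. f x + c) -` ((\<lambda>y. y + - c) -` A) \<inter> S" by auto
    show "U \<in> {(\<lambda>x. f x + c) -` A \<inter> S |A. A \<in> sets borel}" using U shift[OF A] by blast
  qed
  then show ?thesis unfolding vimage_algebra_def by simp
qed

lemma (in finite_measure_subalgebra) cond_var_add_const: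
  assumes f: "integrable M f" and f2: "integrable M (\<lambda>x. (f x)\<^sup>2)"
  shows "AE x in M. cond_var M F (\<lambda>x. f x + c) x = cond_var M F f x"
proof -
  have sq: "(\<lambda>x. (f x + c)\<^sup>2) = (\<lambda>x. (f x)\<^sup>2 + ((2 * c) * f x + c\<^sup>2))"
    by (simp add: fun_eq_iff power2_eq_square algebra_simps)
  have "AE x in M. real_cond_exp M F (\<lambda>x. f x + c) x = real_cond_exp M F f x + real_cond_exp M F (\<lambda>_. c) x"
    using f by (intro real_cond_exp_add) simp_all
  moreover have "AE x in M. real_cond_exp M F (\<lambda>x. (f x + c)\<^sup>2) x
      = real_cond_exp M F (\<lambda>x. (f x)\<^sup>2) x + real_cond_exp M F (\<lambda>x. (2 * c) * f x + c\<^sup>2) x"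
    unfolding sq using f f2 by (intro real_cond_exp_add) simp_all
  moreover have "AE x in M. real_cond_exp M F (\<lambda>x. (2 * c) * f x + c\<^sup>2) x
      = real_cond_exp M F (\<lambda>x. (2 * c) * f x) x + real_cond_exp M F (\<lambda>_. c\<^sup>2) x"
    using f by (intro real_cond_exp_add) simp_all
  moreover have "AE x in M. real_cond_exp M F (\<lambda>x. (2 * c) * f x) x = (2 * c) * real_cond_exp M F f x"
    using f by (rule real_cond_exp_cmult)
  moreover have "AE x in M. real_cond_exp M F (\<lambda>_. c) x = c"
    by (rule real_cond_exp_F_meas) simp_all
  moreover have "AE x in M. real_cond_exp M F (\<lambda>_. c\<^sup>2) x = c\<^sup>2"
    by (rule real_cond_exp_F_meas) simp_all
  ultimately show ?thesis
  proof eventually_elim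
    case (elim x)
    have "cond_var M F (\<lambda>x. f x + c) x
        = (real_cond_exp M F (\<lambda>x. (f x)\<^sup>2) x + (2 * c * real_cond_exp M F f x + c\<^sup>2))
          - (real_cond_exp M F f x + c)\<^sup>2"
      unfolding cond_var_def using elim by simp
    also have "\<dots> = cond_var M F f x"
      unfolding cond_var_def by (simp add: power2_sum)
    finally show ?case .
  qed
qed

lemma measurable_pair_distr:
  assumes "h \<in> borel_measurable (N1 \<Otimes>\<^sub>M N2)" and "Z \<in> measurable M N2"
  shows "h \<in> borel_measurable (N1 \<Otimes>\<^sub>M distr M N2 Z)"
proof -
  have "sets (N1 \<Otimes>\<^sub>M distr M N2 Z) = sets (N1 \<Otimes>\<^sub>M N2)"
    by (rule sets_pair_measure_cong) simp_all
  then show ?thesis using assms(1) measurable_cong_sets by blast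
qed

context prob_space
begin

lemma indep_var_freeze_nn:
  fixes N1 :: "'b measure" and N2 :: "'b measure" and h :: "'b \<times> 'b \<Rightarrow> ennreal"
  assumes ind: "indep_var N1 X N2 Z" and h: "h \<in> borel_measurable (N1 \<Otimes>\<^sub>M N2)"
  shows "(\<integral>\<^sup>+\<omega>. h (X \<omega>, Z \<omega>) \<partial>M) = (\<integral>\<^sup>+\<omega>. (\<integral>\<^sup>+\<omega>'. h (X \<omega>, Z \<omega>') \<partial>M) \<partial>M)"
proof -
  have X: "random_variable N1 X" and Z: "random_variable N2 Z"
    and law: "distr M N1 X \<Otimes>\<^sub>M distr M N2 Z = distr M (N1 \<Otimes>\<^sub>M N2) (\<lambda>\<omega>. (X \<omega>, Z \<omega>))"
    using ind unfolding indep_var_distribution_eq by auto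
  interpret PZ: prob_space "distr M N2 Z" by (rule prob_space_distr[OF Z])
  have "(\<integral>\<^sup>+\<omega>. h (X \<omega>, Z \<omega>) \<partial>M) = integral\<^sup>N (distr M (N1 \<Otimes>\<^sub>M N2) (\<lambda>\<omega>. (X \<omega>, Z \<omega>))) h"
    using X Z h by (simp add: nn_integral_distr)
  also have "\<dots> = integral\<^sup>N (distr M N1 X \<Otimes>\<^sub>M distr M N2 Z) h" by (simp add: law)
  also have "\<dots> = (\<integral>\<^sup>+x. \<integral>\<^sup>+z. h (x, z) \<partial>distr M N2 Z \<partial>distr M N1 X)"
    using h by (simp add: PZ.nn_integral_fst)
  also have "\<dots> = (\<integral>\<^sup>+\<omega>. (\<integral>\<^sup>+\<omega>'. h (X \<omega>, Z \<omega>') \<partial>M) \<partial>M)"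
  proof -
    have "(\<integral>\<^sup>+z. h (x, z) \<partial>distr M N2 Z) = (\<integral>\<^sup>+\<omega>'. h (x, Z \<omega>') \<partial>M)" if "x \<in> space N1" for x
      using Z measurable_Pair2[OF h that] by (simp add: nn_integral_distr)
    moreover have "(\<lambda>x. \<integral>\<^sup>+z. h (x, z) \<partial>distr M N2 Z) \<in> borel_measurable N1"
      using measurable_pair_distr[OF h Z] by (rule PZ.borel_measurable_nn_integral_fst)
    ultimately show ?thesis
      using X by (simp add: nn_integral_distr measurable_space cong: nn_integral_cong)
  qed
  finally show ?thesis .
qed

lemma indep_var_freeze:
  fixes N1 :: "'b measure" and N2 :: "'b measure" and h :: "'b \<times> 'b \<Rightarrow> real"
  assumes ind: "indep_var N1 X N2 Z" and h: "h \<in> borel_measurable (N1 \<Otimes>\<^sub>M N2)"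
    and int: "integrable M (\<lambda>\<omega>. h (X \<omega>, Z \<omega>))"
  shows "(\<integral>\<omega>. h (X \<omega>, Z \<omega>) \<partial>M) = (\<integral>\<omega>. (\<integral>\<omega>'. h (X \<omega>, Z \<omega>') \<partial>M) \<partial>M)"
proof -
  have X: "random_variable N1 X" and Z: "random_variable N2 Z"
    and law: "distr M N1 X \<Otimes>\<^sub>M distr M N2 Z = distr M (N1 \<Otimes>\<^sub>M N2) (\<lambda>\<omega>. (X \<omega>, Z \<omega>))"
    using ind unfolding indep_var_distribution_eq by auto
  interpret PX: prob_space "distr M N1 X" by (rule prob_space_distr[OF X])
  interpret PZ: prob_space "distr M N2 Z" by (rule prob_space_distr[OF Z])
  interpret PXZ: pair_sigma_finite "distr M N1 X" "distr M N2 Z" ..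
  have XZ: "(\<lambda>\<omega>. (X \<omega>, Z \<omega>)) \<in> measurable M (N1 \<Otimes>\<^sub>M N2)" using X Z by simp
  have "integrable (distr M N1 X \<Otimes>\<^sub>M distr M N2 Z) h"
    unfolding law using int by (simp add: integrable_distr_eq[OF XZ h])
  then have "(\<integral>\<omega>. h (X \<omega>, Z \<omega>) \<partial>M) = (\<integral>x. (\<integral>z. h (x, z) \<partial>distr M N2 Z) \<partial>distr M N1 X)"
    using integral_distr[OF XZ h] by (simp add: law PXZ.integral_fst')
  also have "\<dots> = (\<integral>\<omega>. (\<integral>\<omega>'. h (X \<omega>, Z \<omega>') \<partial>M) \<partial>M)"
  proof -
    have "(\<integral>z. h (x, z) \<partial>distr M N2 Z) = (\<integral>\<omega>'. h (x, Z \<omega>') \<partial>M)" if "x \<in> space N1" for x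
      using integral_distr[OF Z measurable_Pair2[OF h that]] .
    moreover have "(\<lambda>x. \<integral>z. h (x, z) \<partial>distr M N2 Z) \<in> borel_measurable N1"
      using measurable_pair_distr[OF h Z] by (intro PZ.borel_measurable_lebesgue_integral) simp
    ultimately show ?thesis
      using X by (simp add: integral_distr measurable_space cong: Bochner_Integration.integral_cong)
  qed
  finally show ?thesis .
qed

lemma indep_var_freeze_integrable:
  fixes N1 :: "'b measure" and N2 :: "'b measure" and h :: "'b \<times> 'b \<Rightarrow> real"
  assumes ind: "indep_var N1 X N2 Z" and h: "h \<in> borel_measurable (N1 \<Otimes>\<^sub>M N2)"
    and nonneg: "\<And>p. 0 \<le> h p"
    and inner: "\<And>x. x \<in> space N1 \<Longrightarrow> integrable M (\<lambda>\<omega>'. h (x, Z \<omega>'))"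
    and outer: "integrable M (\<lambda>\<omega>. \<integral>\<omega>'. h (X \<omega>, Z \<omega>') \<partial>M)"
  shows "integrable M (\<lambda>\<omega>. h (X \<omega>, Z \<omega>))"
proof (rule integrableI_nonneg)
  have X: "random_variable N1 X" and Z: "random_variable N2 Z"
    using ind by (blast dest: indep_var_rv1 indep_var_rv2)+
  then show "(\<lambda>\<omega>. h (X \<omega>, Z \<omega>)) \<in> borel_measurable M"
    using h by measurable
  show "AE \<omega> in M. 0 \<le> h (X \<omega>, Z \<omega>)" by (simp add: nonneg)
  have "(\<integral>\<^sup>+\<omega>. h (X \<omega>, Z \<omega>) \<partial>M) = (\<integral>\<^sup>+\<omega>. (\<integral>\<^sup>+\<omega>'. h (X \<omega>, Z \<omega>') \<partial>M) \<partial>M)"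
    using h by (intro indep_var_freeze_nn[OF ind]) measurable
  also have "\<dots> = (\<integral>\<^sup>+\<omega>. (\<integral>\<omega>'. h (X \<omega>, Z \<omega>') \<partial>M) \<partial>M)"
    using X inner by (intro nn_integral_cong nn_integral_eq_integral) (auto simp: nonneg measurable_space)
  also have "\<dots> = (\<integral>\<omega>. (\<integral>\<omega>'. h (X \<omega>, Z \<omega>') \<partial>M) \<partial>M)"
    using outer by (intro nn_integral_eq_integral) (auto simp: nonneg)
  finally show "(\<integral>\<^sup>+\<omega>. h (X \<omega>, Z \<omega>) \<partial>M) < \<infinity>" by simp
qed

end

locale L2_random_vector = prob_space M for M :: "'a measure" +
  fixes P :: "'a \<Rightarrow> real^'n"
  assumes P_meas [measurable]: "P \<in> borel_measurable M"
    and P_L2: "integrable M (\<lambda>\<omega>. (norm (P \<omega>))\<^sup>2)"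
begin

lemma P_component_meas [measurable]: "(\<lambda>\<omega>. P \<omega> $ i) \<in> borel_measurable M"
  using measurable_compose[OF P_meas borel_measurable_nth] by simp

text \<open>Cauchy-Schwarz bounds \<open>(P\<bullet>K)\<^sup>2\<close> by \<open>\<parallel>P\<parallel>\<^sup>2 \<parallel>K\<parallel>\<^sup>2\<close>.\<close>
lemma integrable_inner_sq: "integrable M (\<lambda>\<omega>. (P \<omega> \<bullet> K)\<^sup>2)"
proof -
  have "integrable M (\<lambda>\<omega>. (norm (P \<omega>))\<^sup>2 * (norm K)\<^sup>2)"
    using P_L2 by simp
  then show ?thesis
  proof (rule Bochner_Integration.integrable_bound)
    show "AE \<omega> in M. norm ((P \<omega> \<bullet> K)\<^sup>2) \<le> norm ((norm (P \<omega>))\<^sup>2 * (norm K)\<^sup>2)"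
      using Cauchy_Schwarz_ineq[of "P _" K] by (intro AE_I2) (simp add: power2_norm_eq_inner)
  qed measurable
qed

lemma integrable_inner: "integrable M (\<lambda>\<omega>. P \<omega> \<bullet> K)"
  by (rule square_integrable_imp_integrable[OF _ integrable_inner_sq]) measurable

lemma integral_inner: "(\<integral>\<omega>. P \<omega> \<bullet> K \<partial>M) = mean_vec M P \<bullet> K"
proof -
  have comp: "integrable M (\<lambda>\<omega>. P \<omega> $ i)" for i
    using integrable_inner[of "axis i 1"] by (simp add: inner_axis)
  have "(\<integral>\<omega>. P \<omega> \<bullet> K \<partial>M) = (\<integral>\<omega>. (\<Sum>i\<in>UNIV. P \<omega> $ i * K $ i) \<partial>M)"
    by (simp add: inner_vec_def)
  also have "\<dots> = (\<Sum>i\<in>UNIV. (\<integral>\<omega>. P \<omega> $ i \<partial>M) * K $ i)"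
    using comp by (simp add: Bochner_Integration.integral_sum)
  finally show ?thesis by (simp add: mean_vec_def inner_vec_def)
qed

lemma integral_inner_sq: "(\<integral>\<omega>. (P \<omega> \<bullet> K)\<^sup>2 \<partial>M) = K \<bullet> (smom_mat M P *v K)"
proof -
  have comp2: "integrable M (\<lambda>\<omega>. P \<omega> $ i * P \<omega> $ l)" for i l
    using P_L2
  proof (rule Bochner_Integration.integrable_bound)
    show "AE \<omega> in M. norm (P \<omega> $ i * P \<omega> $ l) \<le> norm ((norm (P \<omega>))\<^sup>2)"
      using mult_mono[OF component_le_norm_cart component_le_norm_cart]
      by (intro AE_I2) (simp add: abs_mult power2_eq_square)
  qed measurable
  have "(\<integral>\<omega>. (P \<omega> \<bullet> K)\<^sup>2 \<partial>M)
      = (\<integral>\<omega>. (\<Sum>i\<in>UNIV. \<Sum>l\<in>UNIV. K $ i * (P \<omega> $ i * P \<omega> $ l) * K $ l) \<partial>M)"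
    unfolding inner_vec_def inner_real_def power2_eq_square sum_product
    by (intro Bochner_Integration.integral_cong refl sum.cong) (simp add: mult_ac)
  also have "\<dots> = (\<Sum>i\<in>UNIV. \<Sum>l\<in>UNIV. K $ i * (\<integral>\<omega>. P \<omega> $ i * P \<omega> $ l \<partial>M) * K $ l)"
    using comp2 by (simp add: Bochner_Integration.integral_sum)
  finally show ?thesis
    unfolding smom_mat_def inner_vec_def inner_real_def matrix_vector_mult_def
    by (simp add: sum_distrib_left mult.assoc)
qed

lemma integrable_affine_moments:
  fixes e :: "real \<Rightarrow> real"
  assumes e: "e \<in> borel_measurable borel" "\<And>z. \<bar>e z\<bar> \<le> 1"
  shows "integrable M (\<lambda>\<omega>. a * (c + P \<omega> \<bullet> K) * e (c + P \<omega> \<bullet> K))"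
    and "integrable M (\<lambda>\<omega>. a * (c + P \<omega> \<bullet> K) * (P \<omega> \<bullet> K) * e (c + P \<omega> \<bullet> K))"
    and "integrable M (\<lambda>\<omega>. a * (c + P \<omega> \<bullet> K)\<^sup>2 * e (c + P \<omega> \<bullet> K))"
proof -
  have [measurable]: "e \<in> borel_measurable borel" by (fact e(1))
  have ee: "(\<lambda>\<omega>. e (c + P \<omega> \<bullet> K)) \<in> borel_measurable M" by measurable
  have Q: "integrable M (\<lambda>\<omega>. P \<omega> \<bullet> K)" "integrable M (\<lambda>\<omega>. (P \<omega> \<bullet> K)\<^sup>2)"
    by (fact integrable_inner integrable_inner_sq)+
  have "integrable M (\<lambda>\<omega>. a * (c + P \<omega> \<bullet> K))"
    using Q by simp
  then show "integrable M (\<lambda>\<omega>. a * (c + P \<omega> \<bullet> K) * e (c + P \<omega> \<bullet> K))"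
    by (rule integrable_bounded_factor[OF _ ee e(2)])
  have "integrable M (\<lambda>\<omega>. a * c * (P \<omega> \<bullet> K) + a * (P \<omega> \<bullet> K)\<^sup>2)"
    using Q by simp
  then have "integrable M (\<lambda>\<omega>. a * (c + P \<omega> \<bullet> K) * (P \<omega> \<bullet> K))"
    by (simp add: power2_eq_square algebra_simps)
  then show "integrable M (\<lambda>\<omega>. a * (c + P \<omega> \<bullet> K) * (P \<omega> \<bullet> K) * e (c + P \<omega> \<bullet> K))"
    by (rule integrable_bounded_factor[OF _ ee e(2)])
  have "integrable M (\<lambda>\<omega>. a * c\<^sup>2 + (2 * a * c * (P \<omega> \<bullet> K) + a * (P \<omega> \<bullet> K)\<^sup>2))"
    using Q by simp
  then have "integrable M (\<lambda>\<omega>. a * (c + P \<omega> \<bullet> K)\<^sup>2)"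
    by (simp add: power2_eq_square algebra_simps)
  then show "integrable M (\<lambda>\<omega>. a * (c + P \<omega> \<bullet> K)\<^sup>2 * e (c + P \<omega> \<bullet> K))"
    by (rule integrable_bounded_factor[OF _ ee e(2)])
qed

text \<open>Expectation of \<open>r Z + a\<^sub>1 Z e\<^sub>1(Z) + a\<^sub>2 Z e\<^sub>2(Z)\<close> for \<open>Z = c + P\<bullet>K\<close> and bounded measurable
  \<open>e\<^sub>1, e\<^sub>2\<close>; with indicators for \<open>e\<^sub>i\<close> this is the one-period form of the recursion for \<open>a\<^sup>\<plusminus>\<close>.\<close>
lemma integral_affine_split:
  fixes e1 e2 :: "real \<Rightarrow> real"
  assumes e1: "e1 \<in> borel_measurable borel" "\<And>z. \<bar>e1 z\<bar> \<le> 1"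
    and e2: "e2 \<in> borel_measurable borel" "\<And>z. \<bar>e2 z\<bar> \<le> 1"
  shows "(\<integral>\<omega>. r * (c + P \<omega> \<bullet> K) + a1 * (c + P \<omega> \<bullet> K) * e1 (c + P \<omega> \<bullet> K)
              + a2 * (c + P \<omega> \<bullet> K) * e2 (c + P \<omega> \<bullet> K) \<partial>M)
    = r * (c + mean_vec M P \<bullet> K)
      + (\<integral>\<omega>. a1 * (c + P \<omega> \<bullet> K) * e1 (c + P \<omega> \<bullet> K) \<partial>M)
      + (\<integral>\<omega>. a2 * (c + P \<omega> \<bullet> K) * e2 (c + P \<omega> \<bullet> K) \<partial>M)"
proof -
  have "(\<integral>\<omega>. r * (c + P \<omega> \<bullet> K) \<partial>M) = r * (c + mean_vec M P \<bullet> K)"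
    using integrable_inner[of K] integral_inner[of K] by (simp add: prob_space)
  then show ?thesis
    using integrable_inner[of K] integrable_affine_moments(1)[OF e1, of a1 c K]
      integrable_affine_moments(1)[OF e2, of a2 c K]
    by simp
qed

text \<open>Expectation of \<open>r\<^sup>2 Z\<^sup>2 + (2 r a\<^sub>1 + d\<^sub>1) Z\<^sup>2 e\<^sub>1(Z) + (2 r a\<^sub>2 + d\<^sub>2) Z\<^sup>2 e\<^sub>2(Z)\<close>, expanded with
  \<open>Z\<^sup>2 = c Z + Z (P\<bullet>K)\<close> into the terms that occur in the recursion for \<open>b\<^sup>\<plusminus>\<close>.\<close>
lemma integral_affine_sq_split:
  fixes e1 e2 :: "real \<Rightarrow> real"
  assumes e1: "e1 \<in> borel_measurable borel" "\<And>z. \<bar>e1 z\<bar> \<le> 1"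
    and e2: "e2 \<in> borel_measurable borel" "\<And>z. \<bar>e2 z\<bar> \<le> 1"
  shows "(\<integral>\<omega>. r\<^sup>2 * (c + P \<omega> \<bullet> K)\<^sup>2
              + (2 * r * a1 + d1) * (c + P \<omega> \<bullet> K)\<^sup>2 * e1 (c + P \<omega> \<bullet> K)
              + (2 * r * a2 + d2) * (c + P \<omega> \<bullet> K)\<^sup>2 * e2 (c + P \<omega> \<bullet> K) \<partial>M)
    = r\<^sup>2 * (c\<^sup>2 + 2 * c * (mean_vec M P \<bullet> K) + K \<bullet> (smom_mat M P *v K))
      + 2 * r * c * (\<integral>\<omega>. a1 * (c + P \<omega> \<bullet> K) * e1 (c + P \<omega> \<bullet> K) \<partial>M)
      + 2 * r * (\<integral>\<omega>. a1 * (c + P \<omega> \<bullet> K) * (P \<omega> \<bullet> K) * e1 (c + P \<omega> \<bullet> K) \<partial>M)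
      + (\<integral>\<omega>. d1 * (c + P \<omega> \<bullet> K)\<^sup>2 * e1 (c + P \<omega> \<bullet> K) \<partial>M)
      + 2 * r * c * (\<integral>\<omega>. a2 * (c + P \<omega> \<bullet> K) * e2 (c + P \<omega> \<bullet> K) \<partial>M)
      + 2 * r * (\<integral>\<omega>. a2 * (c + P \<omega> \<bullet> K) * (P \<omega> \<bullet> K) * e2 (c + P \<omega> \<bullet> K) \<partial>M)
      + (\<integral>\<omega>. d2 * (c + P \<omega> \<bullet> K)\<^sup>2 * e2 (c + P \<omega> \<bullet> K) \<partial>M)"
proof -
  let ?Z = "\<lambda>\<omega>. c + P \<omega> \<bullet> K"
  define A1 where "A1 \<omega> = a1 * ?Z \<omega> * e1 (?Z \<omega>)" for \<omega>
  define B1 where "B1 \<omega> = a1 * ?Z \<omega> * (P \<omega> \<bullet> K) * e1 (?Z \<omega>)" for \<omega>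
  define C1 where "C1 \<omega> = d1 * (?Z \<omega>)\<^sup>2 * e1 (?Z \<omega>)" for \<omega>
  define A2 where "A2 \<omega> = a2 * ?Z \<omega> * e2 (?Z \<omega>)" for \<omega>
  define B2 where "B2 \<omega> = a2 * ?Z \<omega> * (P \<omega> \<bullet> K) * e2 (?Z \<omega>)" for \<omega>
  define C2 where "C2 \<omega> = d2 * (?Z \<omega>)\<^sup>2 * e2 (?Z \<omega>)" for \<omega>
  define Z2 where "Z2 \<omega> = c\<^sup>2 + 2 * c * (P \<omega> \<bullet> K) + (P \<omega> \<bullet> K)\<^sup>2" for \<omega>
  note ints1 = integrable_affine_moments[OF e1] and ints2 = integrable_affine_moments[OF e2]
  have Z2: "integrable M Z2" "integral\<^sup>L M Z2 = c\<^sup>2 + 2 * c * (mean_vec M P \<bullet> K) + K \<bullet> (smom_mat M P *v K)"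
    unfolding Z2_def using integrable_inner[of K] integrable_inner_sq[of K]
    by (simp_all add: integral_inner integral_inner_sq prob_space)
  have "r\<^sup>2 * (?Z \<omega>)\<^sup>2 + (2 * r * a1 + d1) * (?Z \<omega>)\<^sup>2 * e1 (?Z \<omega>) + (2 * r * a2 + d2) * (?Z \<omega>)\<^sup>2 * e2 (?Z \<omega>)
    = r\<^sup>2 * Z2 \<omega> + (2 * r * c) * A1 \<omega> + (2 * r) * B1 \<omega> + C1 \<omega>
      + (2 * r * c) * A2 \<omega> + (2 * r) * B2 \<omega> + C2 \<omega>" for \<omega>
    unfolding A1_def B1_def C1_def A2_def B2_def C2_def Z2_def
    by (simp add: power2_eq_square algebra_simps)
  then show ?thesis
    using Z2 ints1 ints2
    by (simp add: A1_def B1_def C1_def A2_def B2_def C2_def del: power2_eq_square)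
qed

end

locale mv_recursion =
  fixes M :: "'a measure" and T :: nat and s :: "nat \<Rightarrow> real"
    and P :: "nat \<Rightarrow> 'a \<Rightarrow> real^'n" and \<rho> :: "nat \<Rightarrow> real"
    and Kp Km :: "nat \<Rightarrow> real^'n" and ap am bp bm :: "nat \<Rightarrow> real"
  assumes M: "prob_space M"
    and P_meas: "\<And>j. j < T \<Longrightarrow> P j \<in> borel_measurable M"
    and P_L2: "\<And>j. j < T \<Longrightarrow> integrable M (\<lambda>\<omega>. (norm (P j \<omega>))\<^sup>2)"
    and rho_def: "\<And>j. \<rho> j = (\<Prod>i\<in>{j..<T}. s i)"
    and aT: "ap T = 0" "am T = 0"
    and bT: "bp T = 0" "bm T = 0"
    and ap_rec: "\<And>j. j < T \<Longrightarrow> ap j =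
        \<rho> (Suc j) * (mean_vec M (P j) \<bullet> Kp j)
        + integral\<^sup>L M (\<lambda>\<omega>. ap (Suc j) * (s j + P j \<omega> \<bullet> Kp j)
              * (if s j + P j \<omega> \<bullet> Kp j \<ge> 0 then 1 else 0))
        + integral\<^sup>L M (\<lambda>\<omega>. am (Suc j) * (s j + P j \<omega> \<bullet> Kp j)
              * (if s j + P j \<omega> \<bullet> Kp j < 0 then 1 else 0))"
    and am_rec: "\<And>j. j < T \<Longrightarrow> am j =
        \<rho> (Suc j) * (mean_vec M (P j) \<bullet> Km j)
        + integral\<^sup>L M (\<lambda>\<omega>. ap (Suc j) * (s j + P j \<omega> \<bullet> Km j)
              * (if s j + P j \<omega> \<bullet> Km j \<le> 0 then 1 else 0))
        + integral\<^sup>L M (\<lambda>\<omega>. am (Suc j) * (s j + P j \<omega> \<bullet> Km j)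
              * (if s j + P j \<omega> \<bullet> Km j > 0 then 1 else 0))"
    and bp_rec: "\<And>j. j < T \<Longrightarrow> bp j =
        (\<rho> (Suc j))\<^sup>2 * (Kp j \<bullet> (smom_mat M (P j) *v Kp j))
        + 2 * \<rho> (Suc j) * integral\<^sup>L M (\<lambda>\<omega>. ap (Suc j) * (s j + P j \<omega> \<bullet> Kp j) * (P j \<omega> \<bullet> Kp j)
              * (if s j + P j \<omega> \<bullet> Kp j \<ge> 0 then 1 else 0))
        + 2 * \<rho> (Suc j) * integral\<^sup>L M (\<lambda>\<omega>. am (Suc j) * (s j + P j \<omega> \<bullet> Kp j) * (P j \<omega> \<bullet> Kp j)
              * (if s j + P j \<omega> \<bullet> Kp j < 0 then 1 else 0))
        + integral\<^sup>L M (\<lambda>\<omega>. bp (Suc j) * (s j + P j \<omega> \<bullet> Kp j)\<^sup>2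
              * (if s j + P j \<omega> \<bullet> Kp j \<ge> 0 then 1 else 0))
        + integral\<^sup>L M (\<lambda>\<omega>. bm (Suc j) * (s j + P j \<omega> \<bullet> Kp j)\<^sup>2
              * (if s j + P j \<omega> \<bullet> Kp j < 0 then 1 else 0))"
    and bm_rec: "\<And>j. j < T \<Longrightarrow> bm j =
        (\<rho> (Suc j))\<^sup>2 * (Km j \<bullet> (smom_mat M (P j) *v Km j))
        + 2 * \<rho> (Suc j) * integral\<^sup>L M (\<lambda>\<omega>. ap (Suc j) * (s j + P j \<omega> \<bullet> Km j) * (P j \<omega> \<bullet> Km j)
              * (if s j + P j \<omega> \<bullet> Km j \<le> 0 then 1 else 0))
        + 2 * \<rho> (Suc j) * integral\<^sup>L M (\<lambda>\<omega>. am (Suc j) * (s j + P j \<omega> \<bullet> Km j) * (P j \<omega> \<bullet> Km j)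
              * (if s j + P j \<omega> \<bullet> Km j > 0 then 1 else 0))
        + integral\<^sup>L M (\<lambda>\<omega>. bp (Suc j) * (s j + P j \<omega> \<bullet> Km j)\<^sup>2
              * (if s j + P j \<omega> \<bullet> Km j \<le> 0 then 1 else 0))
        + integral\<^sup>L M (\<lambda>\<omega>. bm (Suc j) * (s j + P j \<omega> \<bullet> Km j)\<^sup>2
              * (if s j + P j \<omega> \<bullet> Km j > 0 then 1 else 0))"
begin

interpretation prob_space M by (rule M)

lemma L2_return: "j < T \<Longrightarrow> L2_random_vector M (P j)"
  by (intro L2_random_vector.intro L2_random_vector_axioms.intro M P_meas P_L2)

text \<open>Under the feedback policy the deviation evolves multiplicatively,
  \<open>Y\<^sub>k\<^sub>+\<^sub>1 = Y\<^sub>k \<cdot> growth k Y\<^sub>k P\<^sub>k\<close>, with the gain \<open>K\<^sup>+\<close> or \<open>K\<^sup>-\<close> chosen by the sign of \<open>Y\<^sub>k\<close>.\<close>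
definition growth :: "nat \<Rightarrow> real \<Rightarrow> real^'n \<Rightarrow> real" where
  "growth k y v = s k + v \<bullet> (if 0 \<le> y then Kp k else Km k)"

text \<open>The claimed conditional first and second moments of \<open>Y\<^sub>T\<close> given \<open>Y\<^sub>k = w\<close>.\<close>
definition cmean :: "nat \<Rightarrow> real \<Rightarrow> real" where
  "cmean k w = \<rho> k * w + ap k * w * (if 0 \<le> w then 1 else 0) + am k * w * (if w < 0 then 1 else 0)"

definition csecond :: "nat \<Rightarrow> real \<Rightarrow> real" where
  "csecond k w = (\<rho> k)\<^sup>2 * w\<^sup>2 + (2 * \<rho> k * ap k + bp k) * w\<^sup>2 * (if 0 \<le> w then 1 else 0)
     + (2 * \<rho> k * am k + bm k) * w\<^sup>2 * (if w < 0 then 1 else 0)"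

lemma cmean_measurable [measurable]: "cmean k \<in> borel_measurable borel"
  unfolding cmean_def by measurable

lemma csecond_measurable [measurable]: "csecond k \<in> borel_measurable borel"
  unfolding csecond_def by measurable

lemma rho_step: "k < T \<Longrightarrow> \<rho> k = s k * \<rho> (Suc k)"
  by (simp add: rho_def prod.atLeast_Suc_lessThan)

lemma cmean_T: "cmean T w = w" and csecond_T: "csecond T w = w\<^sup>2"
  by (simp_all add: cmean_def csecond_def rho_def aT bT)

lemma csecond_minus_cmean_sq:
  "csecond k w - (cmean k w)\<^sup>2 = ((bp k - (ap k)\<^sup>2) * (if 0 \<le> w then 1 else 0)
     + (bm k - (am k)\<^sup>2) * (if w < 0 then 1 else 0)) * w\<^sup>2"
  by (cases "0 \<le> w") (simp_all add: cmean_def csecond_def power2_eq_square algebra_simps)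

lemma cmean_scale_pos: "0 < y \<Longrightarrow> cmean k (y * z) =
    y * (\<rho> k * z + ap k * z * (if 0 \<le> z then 1 else 0) + am k * z * (if z < 0 then 1 else 0))"
  by (simp add: cmean_def zero_le_mult_iff mult_less_0_iff algebra_simps)

lemma cmean_scale_neg: "y < 0 \<Longrightarrow> cmean k (y * z) =
    y * (\<rho> k * z + ap k * z * (if z \<le> 0 then 1 else 0) + am k * z * (if 0 < z then 1 else 0))"
  by (auto simp add: cmean_def zero_le_mult_iff mult_less_0_iff algebra_simps)

lemma csecond_scale_pos: "0 < y \<Longrightarrow> csecond k (y * z) = y\<^sup>2 * ((\<rho> k)\<^sup>2 * z\<^sup>2
    + (2 * \<rho> k * ap k + bp k) * z\<^sup>2 * (if 0 \<le> z then 1 else 0)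
    + (2 * \<rho> k * am k + bm k) * z\<^sup>2 * (if z < 0 then 1 else 0))"
  by (simp add: csecond_def zero_le_mult_iff mult_less_0_iff power_mult_distrib algebra_simps)

lemma csecond_scale_neg: "y < 0 \<Longrightarrow> csecond k (y * z) = y\<^sup>2 * ((\<rho> k)\<^sup>2 * z\<^sup>2
    + (2 * \<rho> k * ap k + bp k) * z\<^sup>2 * (if z \<le> 0 then 1 else 0)
    + (2 * \<rho> k * am k + bm k) * z\<^sup>2 * (if 0 < z then 1 else 0))"
  by (auto simp add: csecond_def zero_le_mult_iff mult_less_0_iff power_mult_distrib algebra_simps)

text \<open>\<open>cmean k\<close> grows linearly and \<open>csecond k\<close> quadratically, so they preserve (square) integrability.\<close>
lemma cmean_integrable:
  assumes "integrable N f"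
  shows "integrable N (\<lambda>x. cmean k (f x))"
proof -
  have [measurable]: "f \<in> borel_measurable N" using assms by (rule borel_measurable_integrable)
  have "integrable N (\<lambda>x. \<rho> k * f x + ap k * f x * (if 0 \<le> f x then 1 else 0)
      + am k * f x * (if f x < 0 then 1 else 0))"
    using assms
    by (intro Bochner_Integration.integrable_add integrable_mult_right
        integrable_bounded_factor[where f="\<lambda>x. _ * f x"]) auto
  then show ?thesis by (simp add: cmean_def)
qed

lemma csecond_integrable:
  assumes [measurable]: "f \<in> borel_measurable N" and f2: "integrable N (\<lambda>x. (f x)\<^sup>2)"
  shows "integrable N (\<lambda>x. csecond k (f x))"
proof -
  have "integrable N (\<lambda>x. (\<rho> k)\<^sup>2 * (f x)\<^sup>2 + (2 * \<rho> k * ap k + bp k) * (f x)\<^sup>2 * (if 0 \<le> f x then 1 else 0)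
      + (2 * \<rho> k * am k + bm k) * (f x)\<^sup>2 * (if f x < 0 then 1 else 0))"
    using f2
    by (intro Bochner_Integration.integrable_add integrable_mult_right
        integrable_bounded_factor[where f="\<lambda>x. _ * (f x)\<^sup>2"]) auto
  then show ?thesis by (simp add: csecond_def)
qed

text \<open>This is exactly where the recursions
  for \<open>a\<^sub>k\<^sup>\<plusminus>\<close> and \<open>b\<^sub>k\<^sup>\<plusminus>\<close> enter.\<close>
lemma cmean_step:
  assumes k: "k < T"
  shows "(\<integral>\<omega>. cmean (Suc k) (y * growth k y (P k \<omega>)) \<partial>M) = cmean k y"
proof (cases y "0::real" rule: linorder_cases)
  case greater
  interpret L2_random_vector M "P k" by (rule L2_return[OF k])
  let ?Z = "\<lambda>\<omega>. s k + P k \<omega> \<bullet> Kp k"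
  have pw: "cmean (Suc k) (y * growth k y (P k \<omega>)) = y * (\<rho> (Suc k) * ?Z \<omega>
      + ap (Suc k) * ?Z \<omega> * (if 0 \<le> ?Z \<omega> then 1 else 0) + am (Suc k) * ?Z \<omega> * (if ?Z \<omega> < 0 then 1 else 0))" for \<omega>
    using greater by (simp add: growth_def cmean_scale_pos)
  have "(\<integral>\<omega>. cmean (Suc k) (y * growth k y (P k \<omega>)) \<partial>M) = y * (\<integral>\<omega>. \<rho> (Suc k) * ?Z \<omega>
      + ap (Suc k) * ?Z \<omega> * (if 0 \<le> ?Z \<omega> then 1 else 0) + am (Suc k) * ?Z \<omega> * (if ?Z \<omega> < 0 then 1 else 0) \<partial>M)"
    unfolding pw by (rule integral_mult_right_zero)
  also have "\<dots> = cmean k y"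
    using greater
    by (subst integral_affine_split) (simp_all add: cmean_def ap_rec[OF k] rho_step[OF k] algebra_simps)
  finally show ?thesis .
next
  case less
  interpret L2_random_vector M "P k" by (rule L2_return[OF k])
  let ?Z = "\<lambda>\<omega>. s k + P k \<omega> \<bullet> Km k"
  have pw: "cmean (Suc k) (y * growth k y (P k \<omega>)) = y * (\<rho> (Suc k) * ?Z \<omega>
      + ap (Suc k) * ?Z \<omega> * (if ?Z \<omega> \<le> 0 then 1 else 0) + am (Suc k) * ?Z \<omega> * (if 0 < ?Z \<omega> then 1 else 0))" for \<omega>
    using less by (simp add: growth_def cmean_scale_neg)
  have "(\<integral>\<omega>. cmean (Suc k) (y * growth k y (P k \<omega>)) \<partial>M) = y * (\<integral>\<omega>. \<rho> (Suc k) * ?Z \<omega>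
      + ap (Suc k) * ?Z \<omega> * (if ?Z \<omega> \<le> 0 then 1 else 0) + am (Suc k) * ?Z \<omega> * (if 0 < ?Z \<omega> then 1 else 0) \<partial>M)"
    unfolding pw by (rule integral_mult_right_zero)
  also have "\<dots> = cmean k y"
    using less
    by (subst integral_affine_split) (simp_all add: cmean_def am_rec[OF k] rho_step[OF k] algebra_simps)
  finally show ?thesis .
qed (simp add: cmean_def)

lemma csecond_step:
  assumes k: "k < T"
  shows "(\<integral>\<omega>. csecond (Suc k) (y * growth k y (P k \<omega>)) \<partial>M) = csecond k y"
proof (cases y "0::real" rule: linorder_cases)
  case greater
  interpret L2_random_vector M "P k" by (rule L2_return[OF k])
  let ?Z = "\<lambda>\<omega>. s k + P k \<omega> \<bullet> Kp k"
  have pw: "csecond (Suc k) (y * growth k y (P k \<omega>)) = y\<^sup>2 * ((\<rho> (Suc k))\<^sup>2 * (?Z \<omega>)\<^sup>2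
      + (2 * \<rho> (Suc k) * ap (Suc k) + bp (Suc k)) * (?Z \<omega>)\<^sup>2 * (if 0 \<le> ?Z \<omega> then 1 else 0)
      + (2 * \<rho> (Suc k) * am (Suc k) + bm (Suc k)) * (?Z \<omega>)\<^sup>2 * (if ?Z \<omega> < 0 then 1 else 0))" for \<omega>
    using greater by (simp add: growth_def csecond_scale_pos)
  have "(\<integral>\<omega>. csecond (Suc k) (y * growth k y (P k \<omega>)) \<partial>M) = y\<^sup>2 * (\<integral>\<omega>. (\<rho> (Suc k))\<^sup>2 * (?Z \<omega>)\<^sup>2
      + (2 * \<rho> (Suc k) * ap (Suc k) + bp (Suc k)) * (?Z \<omega>)\<^sup>2 * (if 0 \<le> ?Z \<omega> then 1 else 0)
      + (2 * \<rho> (Suc k) * am (Suc k) + bm (Suc k)) * (?Z \<omega>)\<^sup>2 * (if ?Z \<omega> < 0 then 1 else 0) \<partial>M)"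
    unfolding pw by (rule integral_mult_right_zero)
  also have "\<dots> = csecond k y"
    using greater
    by (subst integral_affine_sq_split)
      (simp_all add: csecond_def ap_rec[OF k] bp_rec[OF k] rho_step[OF k] algebra_simps power2_eq_square)
  finally show ?thesis .
next
  case less
  interpret L2_random_vector M "P k" by (rule L2_return[OF k])
  let ?Z = "\<lambda>\<omega>. s k + P k \<omega> \<bullet> Km k"
  have pw: "csecond (Suc k) (y * growth k y (P k \<omega>)) = y\<^sup>2 * ((\<rho> (Suc k))\<^sup>2 * (?Z \<omega>)\<^sup>2
      + (2 * \<rho> (Suc k) * ap (Suc k) + bp (Suc k)) * (?Z \<omega>)\<^sup>2 * (if ?Z \<omega> \<le> 0 then 1 else 0)
      + (2 * \<rho> (Suc k) * am (Suc k) + bm (Suc k)) * (?Z \<omega>)\<^sup>2 * (if 0 < ?Z \<omega> then 1 else 0))" for \<omega>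
    using less by (simp add: growth_def csecond_scale_neg)
  have "(\<integral>\<omega>. csecond (Suc k) (y * growth k y (P k \<omega>)) \<partial>M) = y\<^sup>2 * (\<integral>\<omega>. (\<rho> (Suc k))\<^sup>2 * (?Z \<omega>)\<^sup>2
      + (2 * \<rho> (Suc k) * ap (Suc k) + bp (Suc k)) * (?Z \<omega>)\<^sup>2 * (if ?Z \<omega> \<le> 0 then 1 else 0)
      + (2 * \<rho> (Suc k) * am (Suc k) + bm (Suc k)) * (?Z \<omega>)\<^sup>2 * (if 0 < ?Z \<omega> then 1 else 0) \<partial>M)"
    unfolding pw by (rule integral_mult_right_zero)
  also have "\<dots> = csecond k y"
    using less
    by (subst integral_affine_sq_split)
      (simp_all add: csecond_def am_rec[OF k] bm_rec[OF k] rho_step[OF k] algebra_simps power2_eq_square)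
  finally show ?thesis .
qed (simp add: csecond_def)

lemma csecond_step_integrable:
  assumes k: "k < T"
  shows "integrable M (\<lambda>\<omega>. csecond (Suc k) (y * growth k y (P k \<omega>)))"
proof (rule csecond_integrable)
  interpret L2_random_vector M "P k" by (rule L2_return[OF k])
  show "(\<lambda>\<omega>. y * growth k y (P k \<omega>)) \<in> borel_measurable M"
    unfolding growth_def by measurable
  have "integrable M (\<lambda>\<omega>. y\<^sup>2 * (s k + P k \<omega> \<bullet> (if 0 \<le> y then Kp k else Km k))\<^sup>2 * 1)"
    by (rule integrable_affine_moments(3)) auto
  then show "integrable M (\<lambda>\<omega>. (y * growth k y (P k \<omega>))\<^sup>2)"
    by (simp add: growth_def power_mult_distrib)
qed

end

locale mv_closed_loop = mv_recursion M T s P \<rho> Kp Km ap am bp bm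
  for M :: "'a measure" and T s and P :: "nat \<Rightarrow> 'a \<Rightarrow> real^'n" and \<rho> Kp Km ap am bp bm +
  assumes P_indep: "prob_space.indep_vars M (\<lambda>_. borel) P {..<T}"
begin

interpretation prob_space M by (rule M)

text \<open>\<open>terminal k y b\<close> is the deviation at time \<open>T\<close> reached from deviation \<open>y\<close> at time \<open>k\<close> when the
  excess returns of periods \<open>k, \<dots>, T-1\<close> are \<open>b k, \<dots>, b (T-1)\<close> and the feedback policy is used.\<close>
function terminal :: "nat \<Rightarrow> real \<Rightarrow> (nat \<Rightarrow> real^'n) \<Rightarrow> real" where
  "terminal k y b = (if T \<le> k then y else terminal (Suc k) (y * growth k y (b k)) b)"
  by auto
termination by (relation "Wellfounded.measure (\<lambda>(k, y, b). T - k)") auto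

declare terminal.simps [simp del]

lemma terminal_T: "T \<le> k \<Longrightarrow> terminal k y b = y"
  by (simp add: terminal.simps)

lemma terminal_step: "k < T \<Longrightarrow> terminal k y b = terminal (Suc k) (y * growth k y (b k)) b"
  by (subst terminal.simps) simp

lemma terminal_cong:
  "(\<And>i. k \<le> i \<Longrightarrow> i < T \<Longrightarrow> b i = b' i) \<Longrightarrow> terminal k y b = terminal k y b'"
proof (induction k y b rule: terminal.induct)
  case (1 k y b)
  show ?case
  proof (cases "k < T")
    case True
    then show ?thesis unfolding terminal_step[OF True] using 1 by simp
  qed (simp add: terminal_T)
qed

lemma terminal_measurable:
  assumes "f \<in> borel_measurable N" and "\<And>i. k \<le> i \<Longrightarrow> i < T \<Longrightarrow> (\<lambda>x. c x i) \<in> borel_measurable N"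
  shows "(\<lambda>x. terminal k (f x) (c x)) \<in> borel_measurable N"
  using assms
proof (induction "T - k" arbitrary: k f)
  case 0
  then show ?case by (simp add: terminal_T)
next
  case (Suc d)
  then have k: "k < T" by simp
  have [measurable]: "f \<in> borel_measurable N" "(\<lambda>x. c x k) \<in> borel_measurable N"
    using Suc.prems k by auto
  have "(\<lambda>x. f x * growth k (f x) (c x k)) \<in> borel_measurable N"
    unfolding growth_def by measurable
  then have "(\<lambda>x. terminal (Suc k) (f x * growth k (f x) (c x k)) (c x)) \<in> borel_measurable N"
    using Suc.hyps(2) Suc.prems(2) by (intro Suc.hyps(1)) auto
  then show ?case unfolding terminal_step[OF k] .
qed

lemma terminal_freeze:
  fixes \<sigma> :: "(nat \<Rightarrow> real^'n) \<Rightarrow> real" and F :: "real \<Rightarrow> real \<Rightarrow> real"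
  assumes I: "I \<subseteq> {..<k}" and k: "k \<le> T"
    and \<sigma>: "\<sigma> \<in> borel_measurable (PiM I (\<lambda>_. borel))"
    and F: "(\<lambda>(w, v). F w v) \<in> borel_measurable (borel \<Otimes>\<^sub>M borel)"
  defines "state \<equiv> \<lambda>\<omega>. \<sigma> (restrict (\<lambda>i. P i \<omega>) I)"
  shows "integrable M (\<lambda>\<omega>. F (state \<omega>) (terminal k (state \<omega>) (\<lambda>i. P i \<omega>))) \<Longrightarrow>
      (\<integral>\<omega>. F (state \<omega>) (terminal k (state \<omega>) (\<lambda>i. P i \<omega>)) \<partial>M)
      = (\<integral>\<omega>. (\<integral>\<omega>'. F (state \<omega>) (terminal k (state \<omega>) (\<lambda>i. P i \<omega>')) \<partial>M) \<partial>M)"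
    and "(\<And>w v. 0 \<le> F w v) \<Longrightarrow> (\<And>w. integrable M (\<lambda>\<omega>'. F w (terminal k w (\<lambda>i. P i \<omega>')))) \<Longrightarrow>
      integrable M (\<lambda>\<omega>. \<integral>\<omega>'. F (state \<omega>) (terminal k (state \<omega>) (\<lambda>i. P i \<omega>')) \<partial>M) \<Longrightarrow>
      integrable M (\<lambda>\<omega>. F (state \<omega>) (terminal k (state \<omega>) (\<lambda>i. P i \<omega>)))"
proof -
  let ?J = "{k..<T}"
  let ?past = "\<lambda>\<omega>. restrict (\<lambda>i. P i \<omega>) I" and ?future = "\<lambda>\<omega>. restrict (\<lambda>i. P i \<omega>) ?J"
  define h where "h p = F (\<sigma> (fst p)) (terminal k (\<sigma> (fst p)) (snd p))" for p
  have ind: "indep_var (PiM I (\<lambda>_. borel)) ?past (PiM ?J (\<lambda>_. borel)) ?future"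
    using I k by (intro indep_var_restrict[OF P_indep]) auto
  have [measurable]: "\<sigma> \<in> borel_measurable (PiM I (\<lambda>_. borel))" by (fact \<sigma>)
  have [measurable]: "(\<lambda>(w, v). F w v) \<in> borel_measurable (borel \<Otimes>\<^sub>M borel)" by (fact F)
  have "(\<lambda>p. terminal k (\<sigma> (fst p)) (snd p)) \<in> borel_measurable (PiM I (\<lambda>_. borel) \<Otimes>\<^sub>M PiM ?J (\<lambda>_. borel))"
    by (intro terminal_measurable) measurable
  then have h: "h \<in> borel_measurable (PiM I (\<lambda>_. borel) \<Otimes>\<^sub>M PiM ?J (\<lambda>_. borel))"
    unfolding h_def by measurable
  have h_future: "h (x, ?future \<omega>') = F (\<sigma> x) (terminal k (\<sigma> x) (\<lambda>i. P i \<omega>'))" for x \<omega>'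
  proof -
    have "terminal k (\<sigma> x) (?future \<omega>') = terminal k (\<sigma> x) (\<lambda>i. P i \<omega>')"
      by (rule terminal_cong) simp
    then show ?thesis by (simp add: h_def)
  qed
  have h_state: "h (?past \<omega>, ?future \<omega>') = F (state \<omega>) (terminal k (state \<omega>) (\<lambda>i. P i \<omega>'))" for \<omega> \<omega>'
    by (simp add: h_future state_def)
  show "(\<integral>\<omega>. F (state \<omega>) (terminal k (state \<omega>) (\<lambda>i. P i \<omega>)) \<partial>M)
      = (\<integral>\<omega>. (\<integral>\<omega>'. F (state \<omega>) (terminal k (state \<omega>) (\<lambda>i. P i \<omega>')) \<partial>M) \<partial>M)"
    if "integrable M (\<lambda>\<omega>. F (state \<omega>) (terminal k (state \<omega>) (\<lambda>i. P i \<omega>)))"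
    using indep_var_freeze[OF ind h] that unfolding h_state by simp
  show "integrable M (\<lambda>\<omega>. F (state \<omega>) (terminal k (state \<omega>) (\<lambda>i. P i \<omega>)))"
    if "\<And>w v. 0 \<le> F w v" "\<And>w. integrable M (\<lambda>\<omega>'. F w (terminal k w (\<lambda>i. P i \<omega>')))"
      "integrable M (\<lambda>\<omega>. \<integral>\<omega>'. F (state \<omega>) (terminal k (state \<omega>) (\<lambda>i. P i \<omega>')) \<partial>M)"
    using indep_var_freeze_integrable[OF ind h] that unfolding h_future by (simp add: h_def state_def)
qed

lemma terminal_measurable_returns:
  "(\<lambda>\<omega>. terminal k (f \<omega>) (\<lambda>i. P i \<omega>)) \<in> borel_measurable M" if "f \<in> borel_measurable M"
  using that P_meas by (intro terminal_measurable) auto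

definition terminal_moments_at :: "nat \<Rightarrow> bool" where
  "terminal_moments_at k \<longleftrightarrow> (\<forall>y. integrable M (\<lambda>\<omega>. (terminal k y (\<lambda>i. P i \<omega>))\<^sup>2)
      \<and> (\<integral>\<omega>. terminal k y (\<lambda>i. P i \<omega>) \<partial>M) = cmean k y
      \<and> (\<integral>\<omega>. (terminal k y (\<lambda>i. P i \<omega>))\<^sup>2 \<partial>M) = csecond k y)"

text \<open>Freezing the period-\<open>k\<close> return reduces the time-\<open>k\<close> moments to averages of the time-\<open>k+1\<close>
  moment functions, which \<open>cmean_step\<close> and \<open>csecond_step\<close> evaluate.\<close>
lemma terminal_moments_step:
  assumes "k < T" and IH: "terminal_moments_at (Suc k)"
  shows "terminal_moments_at k"
  unfolding terminal_moments_at_def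
proof
  fix y
  define \<sigma> where "\<sigma> x = y * growth k y (x k)" for x :: "nat \<Rightarrow> real^'n"
  have \<sigma>: "\<sigma> \<in> borel_measurable (PiM {k} (\<lambda>_. borel))"
    unfolding \<sigma>_def growth_def by measurable
  have state: "\<sigma> (restrict (\<lambda>i. P i \<omega>) {k}) = y * growth k y (P k \<omega>)" for \<omega>
    by (simp add: \<sigma>_def)
  have unfold: "terminal k y b = terminal (Suc k) (\<sigma> (restrict b {k})) b" for b
    unfolding terminal_step[OF \<open>k < T\<close>] by (simp add: \<sigma>_def)
  note freeze = terminal_freeze[of "{k}" "Suc k" \<sigma>, OF _ _ \<sigma>, unfolded state]
  have sq_meas: "(\<lambda>(w::real, v::real). v\<^sup>2) \<in> borel_measurable (borel \<Otimes>\<^sub>M borel)"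
    by measurable
  have id_meas: "(\<lambda>(w::real, v::real). v) \<in> borel_measurable (borel \<Otimes>\<^sub>M borel)"
    by measurable
  have IH_int: "integrable M (\<lambda>\<omega>'. (terminal (Suc k) w (\<lambda>i. P i \<omega>'))\<^sup>2)"
    and IH_mean: "(\<integral>\<omega>'. terminal (Suc k) w (\<lambda>i. P i \<omega>') \<partial>M) = cmean (Suc k) w"
    and IH_second: "(\<integral>\<omega>'. (terminal (Suc k) w (\<lambda>i. P i \<omega>'))\<^sup>2 \<partial>M) = csecond (Suc k) w" for w
    using IH unfolding terminal_moments_at_def by blast+
  have sq_int: "integrable M (\<lambda>\<omega>. (terminal k y (\<lambda>i. P i \<omega>))\<^sup>2)"
    unfolding unfold state
  proof (rule freeze(2)[where F="\<lambda>_ v. v\<^sup>2"])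
    show "integrable M (\<lambda>\<omega>. \<integral>\<omega>'. (terminal (Suc k) (y * growth k y (P k \<omega>)) (\<lambda>i. P i \<omega>'))\<^sup>2 \<partial>M)"
      unfolding IH_second using \<open>k < T\<close> by (rule csecond_step_integrable)
  qed (use \<open>k < T\<close> IH_int sq_meas in simp_all)
  have int: "integrable M (\<lambda>\<omega>. terminal k y (\<lambda>i. P i \<omega>))"
    by (rule square_integrable_imp_integrable[OF terminal_measurable_returns sq_int]) simp
  have mean_freeze: "(\<integral>\<omega>. terminal k y (\<lambda>i. P i \<omega>) \<partial>M)
      = (\<integral>\<omega>. (\<integral>\<omega>'. terminal (Suc k) (y * growth k y (P k \<omega>)) (\<lambda>i. P i \<omega>') \<partial>M) \<partial>M)"
    using int unfolding unfold state
    by (rule freeze(1)[where F="\<lambda>_ v. v", OF _ _ id_meas, rotated 2]) (use \<open>k < T\<close> in simp_all)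
  have second_freeze: "(\<integral>\<omega>. (terminal k y (\<lambda>i. P i \<omega>))\<^sup>2 \<partial>M)
      = (\<integral>\<omega>. (\<integral>\<omega>'. (terminal (Suc k) (y * growth k y (P k \<omega>)) (\<lambda>i. P i \<omega>'))\<^sup>2 \<partial>M) \<partial>M)"
    using sq_int unfolding unfold state
    by (rule freeze(1)[where F="\<lambda>_ v. v\<^sup>2", OF _ _ sq_meas, rotated 2]) (use \<open>k < T\<close> in simp_all)
  show "integrable M (\<lambda>\<omega>. (terminal k y (\<lambda>i. P i \<omega>))\<^sup>2)
      \<and> (\<integral>\<omega>. terminal k y (\<lambda>i. P i \<omega>) \<partial>M) = cmean k y
      \<and> (\<integral>\<omega>. (terminal k y (\<lambda>i. P i \<omega>))\<^sup>2 \<partial>M) = csecond k y"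
    unfolding mean_freeze second_freeze IH_mean IH_second
    using sq_int cmean_step[OF \<open>k < T\<close>] csecond_step[OF \<open>k < T\<close>] by (intro conjI)
qed

lemma terminal_moments:
  assumes "k \<le> T"
  shows "integrable M (\<lambda>\<omega>. (terminal k y (\<lambda>i. P i \<omega>))\<^sup>2)"
    and "(\<integral>\<omega>. terminal k y (\<lambda>i. P i \<omega>) \<partial>M) = cmean k y"
    and "(\<integral>\<omega>. (terminal k y (\<lambda>i. P i \<omega>))\<^sup>2 \<partial>M) = csecond k y"
proof -
  have "terminal_moments_at k"
    using assms
  proof (induction k rule: inc_induct)
    case base
    show ?case
      by (simp add: terminal_moments_at_def terminal_T cmean_T csecond_T prob_space)
  next
    case (step k)
    then show ?case by (intro terminal_moments_step[of k]) simp_all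
  qed
  then show "integrable M (\<lambda>\<omega>. (terminal k y (\<lambda>i. P i \<omega>))\<^sup>2)"
    and "(\<integral>\<omega>. terminal k y (\<lambda>i. P i \<omega>) \<partial>M) = cmean k y"
    and "(\<integral>\<omega>. (terminal k y (\<lambda>i. P i \<omega>))\<^sup>2 \<partial>M) = csecond k y"
    unfolding terminal_moments_at_def by blast+
qed

end

locale mv_wealth = mv_closed_loop M T s P \<rho> Kp Km ap am bp bm
  for M :: "'a measure" and T s and P :: "nat \<Rightarrow> 'a \<Rightarrow> real^'n" and \<rho> Kp Km ap am bp bm +
  fixes x0 W :: real and X Y :: "nat \<Rightarrow> 'a \<Rightarrow> real" and u :: "nat \<Rightarrow> 'a \<Rightarrow> real^'n" and t :: nat
  assumes s_pos: "\<And>j. j < T \<Longrightarrow> 0 < s j"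
    and X0: "\<And>\<omega>. \<omega> \<in> space M \<Longrightarrow> X 0 \<omega> = x0"
    and X_step: "\<And>j \<omega>. j < T \<Longrightarrow> \<omega> \<in> space M \<Longrightarrow>
        X (Suc j) \<omega> = s j * X j \<omega> + P j \<omega> \<bullet> u j \<omega>"
    and Y_def: "\<And>j \<omega>. Y j \<omega> = X j \<omega> - W / \<rho> j"
    and u_early_adapted: "\<And>j. j < t \<Longrightarrow> \<exists>g \<in> borel_measurable (PiM {..<j} (\<lambda>_. borel)).
        \<forall>\<omega> \<in> space M. u j \<omega> = g (\<lambda>i \<in> {..<j}. P i \<omega>)"
    and u_early_L2: "\<And>j. j < t \<Longrightarrow> integrable M (\<lambda>\<omega>. (norm (u j \<omega>))\<^sup>2)"
    and u_policy: "\<And>j \<omega>. t \<le> j \<Longrightarrow> j < T \<Longrightarrow> \<omega> \<in> space M \<Longrightarrow>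
        u j \<omega> = (Y j \<omega> * (if Y j \<omega> \<ge> 0 then 1 else 0)) *\<^sub>R Kp j
               + (Y j \<omega> * (if Y j \<omega> < 0 then 1 else 0)) *\<^sub>R Km j"
    and t_le: "t \<le> T"
begin

interpretation prob_space M by (rule M)

lemma rho_pos: "0 < \<rho> j"
  unfolding rho_def by (rule prod_pos) (use s_pos in force)

lemma returns_restrict_measurable:
  "I \<subseteq> {..<T} \<Longrightarrow> (\<lambda>\<omega>. restrict (\<lambda>i. P i \<omega>) I) \<in> measurable M (PiM I (\<lambda>_. borel))"
  by (rule measurable_restrict) (auto intro: P_meas)

lemma wealth_factorization:
  assumes "j \<le> t"
  shows "\<exists>G \<in> borel_measurable (PiM {..<j} (\<lambda>_. borel)). \<forall>\<omega>\<in>space M. X j \<omega> = G (restrict (\<lambda>i. P i \<omega>) {..<j})"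
  using assms
proof (induction j)
  case 0
  show ?case by (intro bexI[of _ "\<lambda>_. x0"]) (simp_all add: X0)
next
  case (Suc j)
  then have jt: "j < t" and jT: "j < T" using t_le by auto
  obtain G where G: "G \<in> borel_measurable (PiM {..<j} (\<lambda>_. borel))"
    and XG: "\<forall>\<omega>\<in>space M. X j \<omega> = G (restrict (\<lambda>i. P i \<omega>) {..<j})"
    using Suc.IH[OF less_imp_le[OF jt]] by blast
  obtain g where g: "g \<in> borel_measurable (PiM {..<j} (\<lambda>_. borel))"
    and ug: "\<forall>\<omega>\<in>space M. u j \<omega> = g (restrict (\<lambda>i. P i \<omega>) {..<j})"
    using u_early_adapted[OF jt] by blast
  define G' where "G' b = s j * G (restrict b {..<j}) + b j \<bullet> g (restrict b {..<j})" for b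
  have past: "(\<lambda>b. restrict b {..<j}) \<in> measurable (PiM {..<Suc j} (\<lambda>_. borel)) (PiM {..<j} (\<lambda>_. borel))"
    by (rule measurable_restrict_subset) auto
  have [measurable]: "(\<lambda>b. G (restrict b {..<j})) \<in> borel_measurable (PiM {..<Suc j} (\<lambda>_. borel))"
    "(\<lambda>b. g (restrict b {..<j})) \<in> borel_measurable (PiM {..<Suc j} (\<lambda>_. borel))"
    "(\<lambda>b. b j) \<in> borel_measurable (PiM {..<Suc j} (\<lambda>_::nat. borel :: (real^'n) measure))"
    using measurable_compose[OF past G] measurable_compose[OF past g] by simp_all
  have "G' \<in> borel_measurable (PiM {..<Suc j} (\<lambda>_. borel))"
    unfolding G'_def by measurable
  moreover have "\<forall>\<omega>\<in>space M. X (Suc j) \<omega> = G' (restrict (\<lambda>i. P i \<omega>) {..<Suc j})"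
    using XG ug by (simp add: X_step[OF jT] G'_def Int_absorb1)
  ultimately show ?case by blast
qed

lemma wealth_measurable: "j \<le> t \<Longrightarrow> X j \<in> borel_measurable M"
proof -
  assume "j \<le> t"
  then obtain G where G: "G \<in> borel_measurable (PiM {..<j} (\<lambda>_. borel))"
    and XG: "\<forall>\<omega>\<in>space M. X j \<omega> = G (restrict (\<lambda>i. P i \<omega>) {..<j})"
    using wealth_factorization by blast
  have "(\<lambda>\<omega>. G (restrict (\<lambda>i. P i \<omega>) {..<j})) \<in> borel_measurable M"
    using \<open>j \<le> t\<close> t_le by (intro measurable_compose[OF returns_restrict_measurable G]) auto
  then show ?thesis using XG by (simp cong: measurable_cong)
qed

text \<open>Before time \<open>t\<close> the return \<open>P\<^sub>j\<close> is independent of the adapted position \<open>u\<^sub>j\<close>, so the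
  product of their square norms is integrable.\<close>
lemma return_position_integrable:
  assumes jt: "j < t"
  shows "integrable M (\<lambda>\<omega>. (norm (P j \<omega>))\<^sup>2 * (norm (u j \<omega>))\<^sup>2)"
proof -
  have jT: "j < T" using jt t_le by simp
  obtain g where g: "g \<in> borel_measurable (PiM {..<j} (\<lambda>_. borel))"
    and ug: "\<forall>\<omega>\<in>space M. u j \<omega> = g (restrict (\<lambda>i. P i \<omega>) {..<j})"
    using u_early_adapted[OF jt] by blast
  have ind: "indep_var (PiM {j} (\<lambda>_. borel)) (\<lambda>\<omega>. restrict (\<lambda>i. P i \<omega>) {j})
      (PiM {..<j} (\<lambda>_. borel)) (\<lambda>\<omega>. restrict (\<lambda>i. P i \<omega>) {..<j})"
    by (rule indep_var_restrict[OF P_indep]) (use jT in auto)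
  have "(\<lambda>x. (norm (x j))\<^sup>2) \<in> borel_measurable (PiM {j} (\<lambda>_::nat. borel :: (real^'n) measure))"
    and "(\<lambda>x. (norm (g x))\<^sup>2) \<in> borel_measurable (PiM {..<j} (\<lambda>_. borel))"
    using g by measurable
  from indep_var_compose[OF ind this]
  have "indep_var borel (\<lambda>\<omega>. (norm (P j \<omega>))\<^sup>2) borel (\<lambda>\<omega>. (norm (g (restrict (\<lambda>i. P i \<omega>) {..<j})))\<^sup>2)"
    by (simp add: comp_def)
  moreover have "integrable M (\<lambda>\<omega>. (norm (g (restrict (\<lambda>i. P i \<omega>) {..<j})))\<^sup>2)"
    using u_early_L2[OF jt] ug by (simp cong: Bochner_Integration.integrable_cong)
  ultimately have "integrable M (\<lambda>\<omega>. (norm (P j \<omega>))\<^sup>2 * (norm (g (restrict (\<lambda>i. P i \<omega>) {..<j})))\<^sup>2)"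
    using P_L2[OF jT] by (intro indep_var_integrable)
  then show ?thesis
    using ug by (simp cong: Bochner_Integration.integrable_cong)
qed

text \<open>Up to time \<open>t\<close> the wealth has finite second moment, by induction using
  \<open>(s X + P\<bullet>u)\<^sup>2 \<le> 2 s\<^sup>2 X\<^sup>2 + 2 \<parallel>P\<parallel>\<^sup>2 \<parallel>u\<parallel>\<^sup>2\<close>.\<close>
lemma wealth_square_integrable: "j \<le> t \<Longrightarrow> integrable M (\<lambda>\<omega>. (X j \<omega>)\<^sup>2)"
proof (induction j)
  case 0
  then show ?case by (simp add: X0 cong: Bochner_Integration.integrable_cong)
next
  case (Suc j)
  then have jt: "j < t" and jT: "j < T" using t_le by auto
  have "integrable M (\<lambda>\<omega>. 2 * (s j)\<^sup>2 * (X j \<omega>)\<^sup>2 + 2 * ((norm (P j \<omega>))\<^sup>2 * (norm (u j \<omega>))\<^sup>2))"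
    using Suc.IH jt return_position_integrable[OF jt] by simp
  then show ?case
  proof (rule Bochner_Integration.integrable_bound)
    show "(\<lambda>\<omega>. (X (Suc j) \<omega>)\<^sup>2) \<in> borel_measurable M"
      using wealth_measurable[OF Suc.prems] by measurable
    show "AE \<omega> in M. norm ((X (Suc j) \<omega>)\<^sup>2)
        \<le> norm (2 * (s j)\<^sup>2 * (X j \<omega>)\<^sup>2 + 2 * ((norm (P j \<omega>))\<^sup>2 * (norm (u j \<omega>))\<^sup>2))"
    proof (rule AE_I2)
      fix \<omega> assume \<omega>: "\<omega> \<in> space M"
      have sum_sq: "(a + b)\<^sup>2 \<le> 2 * a\<^sup>2 + 2 * b\<^sup>2" for a b :: real
        using sum_squares_ge_zero[of "a - b" 0] by (simp add: power2_eq_square algebra_simps)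
      have "(P j \<omega> \<bullet> u j \<omega>)\<^sup>2 \<le> (norm (P j \<omega>))\<^sup>2 * (norm (u j \<omega>))\<^sup>2"
        using Cauchy_Schwarz_ineq[of "P j \<omega>" "u j \<omega>"] by (simp add: power2_norm_eq_inner)
      then show "norm ((X (Suc j) \<omega>)\<^sup>2)
          \<le> norm (2 * (s j)\<^sup>2 * (X j \<omega>)\<^sup>2 + 2 * ((norm (P j \<omega>))\<^sup>2 * (norm (u j \<omega>))\<^sup>2))"
        using sum_sq[of "s j * X j \<omega>" "P j \<omega> \<bullet> u j \<omega>"]
        by (simp add: X_step[OF jT \<omega>] power_mult_distrib)
    qed
  qed
qed

lemma deviation_factorization:
  obtains G where "G \<in> borel_measurable (PiM {..<t} (\<lambda>_. borel))"
    and "\<And>\<omega>. \<omega> \<in> space M \<Longrightarrow> Y t \<omega> = G (restrict (\<lambda>i. P i \<omega>) {..<t})"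
proof -
  obtain G where G: "G \<in> borel_measurable (PiM {..<t} (\<lambda>_. borel))"
    and XG: "\<forall>\<omega>\<in>space M. X t \<omega> = G (restrict (\<lambda>i. P i \<omega>) {..<t})"
    using wealth_factorization[of t] by blast
  show ?thesis
  proof
    show "(\<lambda>b. G b - W / \<rho> t) \<in> borel_measurable (PiM {..<t} (\<lambda>_. borel))"
      using G by measurable
  qed (use XG in \<open>simp add: Y_def\<close>)
qed

lemma deviation_measurable: "Y t \<in> borel_measurable M"
  using wealth_measurable[of t] by (simp add: Y_def[abs_def])

lemma deviation_square_integrable: "integrable M (\<lambda>\<omega>. (Y t \<omega>)\<^sup>2)"
proof -
  have X2: "integrable M (\<lambda>\<omega>. (X t \<omega>)\<^sup>2)" by (rule wealth_square_integrable) simp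
  then have "integrable M (X t)"
    by (rule square_integrable_imp_integrable[OF wealth_measurable, rotated]) simp
  then have "integrable M (\<lambda>\<omega>. (X t \<omega>)\<^sup>2 - 2 * (W / \<rho> t) * X t \<omega> + (W / \<rho> t)\<^sup>2)"
    using X2 by simp
  then show ?thesis by (simp add: Y_def power2_eq_square algebra_simps)
qed

text \<open>After time \<open>t\<close> the feedback policy makes the deviation multiplicative, so the terminal deviation
  is the closed-loop map applied to \<open>Y\<^sub>t\<close>.\<close>
lemma deviation_step:
  assumes "t \<le> j" "j < T" "\<omega> \<in> space M"
  shows "Y (Suc j) \<omega> = Y j \<omega> * growth j (Y j \<omega>) (P j \<omega>)"
proof -
  have u: "u j \<omega> = Y j \<omega> *\<^sub>R (if 0 \<le> Y j \<omega> then Kp j else Km j)"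
    using u_policy[OF assms] by simp
  show ?thesis
    unfolding Y_def X_step[OF assms(2,3)] u growth_def rho_step[OF assms(2)]
    using s_pos[OF assms(2)] rho_pos[of "Suc j"] by (simp add: field_simps inner_scaleR_right)
qed

lemma deviation_terminal:
  assumes "\<omega> \<in> space M"
  shows "Y T \<omega> = terminal t (Y t \<omega>) (\<lambda>i. P i \<omega>)"
proof -
  have "t \<le> j \<Longrightarrow> Y T \<omega> = terminal j (Y j \<omega>) (\<lambda>i. P i \<omega>)" if "j \<le> T" for j
    using that
  proof (induction j rule: inc_induct)
    case base
    show ?case by (simp add: terminal_T)
  next
    case (step j)
    then show ?case
      unfolding terminal_step[OF \<open>j < T\<close>] by (simp add: deviation_step assms)
  qed
  from this[OF t_le order_refl] show ?thesis .
qed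

abbreviation sigma_Yt :: "'a measure" where
  "sigma_Yt \<equiv> vimage_algebra (space M) (Y t) borel"

lemma sigma_Yt_subalgebra: "finite_measure_subalgebra M sigma_Yt"
proof -
  have "subalgebra M sigma_Yt"
    using measurable_iff_sets[THEN iffD1, OF deviation_measurable] unfolding subalgebra_def by simp
  then show ?thesis
    by (intro finite_measure_subalgebra.intro finite_measure_subalgebra_axioms.intro finite_measure_axioms)
qed

lemma deviation_sigma_Yt_measurable: "Y t \<in> borel_measurable sigma_Yt"
  by (rule measurable_vimage_algebra1) simp

lemma set_integral_terminal:
  fixes g :: "real \<Rightarrow> real"
  assumes g [measurable]: "g \<in> borel_measurable borel" and int: "integrable M (\<lambda>\<omega>. g (Y T \<omega>))"
    and A: "A \<in> sets sigma_Yt"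
  shows "(\<integral>\<omega>\<in>A. g (Y T \<omega>) \<partial>M) = (\<integral>\<omega>\<in>A. (\<integral>\<omega>'. g (terminal t (Y t \<omega>) (\<lambda>i. P i \<omega>')) \<partial>M) \<partial>M)"
proof -
  obtain G where G: "G \<in> borel_measurable (PiM {..<t} (\<lambda>_. borel))"
    and YG: "\<And>\<omega>. \<omega> \<in> space M \<Longrightarrow> Y t \<omega> = G (restrict (\<lambda>i. P i \<omega>) {..<t})"
    using deviation_factorization by blast
  have "sets sigma_Yt = {Y t -` B \<inter> space M | B. B \<in> sets borel}"
    by (rule sets_vimage_algebra2) (simp add: measurable_space[OF deviation_measurable])
  with A obtain B where B [measurable]: "B \<in> sets borel" and AB: "A = Y t -` B \<inter> space M" by blast
  have ind_A: "indicator A \<omega> = (indicator B (Y t \<omega>) :: real)" if "\<omega> \<in> space M" for \<omega>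
    using that AB by (simp add: indicator_def)
  define F where "F w v = g v * indicator B w" for w v :: real
  have F: "(\<lambda>(w, v). F w v) \<in> borel_measurable (borel \<Otimes>\<^sub>M borel)"
    unfolding F_def by measurable
  have F_Y: "F (Y t \<omega>) (Y T \<omega>) = indicator A \<omega> * g (Y T \<omega>)" if "\<omega> \<in> space M" for \<omega>
    using that by (simp add: F_def ind_A)
  note freeze = terminal_freeze(1)[of "{..<t}" t G F, OF _ t_le G F]
  have "integrable M (\<lambda>\<omega>. F (Y t \<omega>) (Y T \<omega>))"
    unfolding F_def using int deviation_measurable
    by (intro integrable_bounded_factor) (auto simp: indicator_def)
  then have "integrable M (\<lambda>\<omega>. F (G (restrict (\<lambda>i. P i \<omega>) {..<t})) (terminal t (G (restrict (\<lambda>i. P i \<omega>) {..<t})) (\<lambda>i. P i \<omega>)))"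
    by (rule Bochner_Integration.integrable_cong[THEN iffD1, rotated 2]) (simp_all add: YG deviation_terminal)
  from freeze[OF _ this]
  have "(\<integral>\<omega>. F (Y t \<omega>) (Y T \<omega>) \<partial>M) = (\<integral>\<omega>. (\<integral>\<omega>'. F (Y t \<omega>) (terminal t (Y t \<omega>) (\<lambda>i. P i \<omega>')) \<partial>M) \<partial>M)"
    by (simp add: YG deviation_terminal cong: Bochner_Integration.integral_cong)
  then show ?thesis
    unfolding set_lebesgue_integral_def
    by (simp add: F_Y F_def ind_A mult.commute cong: Bochner_Integration.integral_cong)
qed

lemma terminal_deviation_integrable:
  shows "integrable M (\<lambda>\<omega>. (Y T \<omega>)\<^sup>2)" and "integrable M (Y T)"
proof -
  obtain G where G: "G \<in> borel_measurable (PiM {..<t} (\<lambda>_. borel))"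
    and YG: "\<And>\<omega>. \<omega> \<in> space M \<Longrightarrow> Y t \<omega> = G (restrict (\<lambda>i. P i \<omega>) {..<t})"
    using deviation_factorization by blast
  have sq_meas: "(\<lambda>(w::real, v::real). v\<^sup>2) \<in> borel_measurable (borel \<Otimes>\<^sub>M borel)"
    by measurable
  have "integrable M (\<lambda>\<omega>. csecond t (Y t \<omega>))"
    by (rule csecond_integrable[OF deviation_measurable deviation_square_integrable])
  then have "integrable M (\<lambda>\<omega>. \<integral>\<omega>'. (terminal t (G (restrict (\<lambda>i. P i \<omega>) {..<t})) (\<lambda>i. P i \<omega>'))\<^sup>2 \<partial>M)"
    by (rule Bochner_Integration.integrable_cong[THEN iffD1, rotated 2])
      (simp_all add: YG terminal_moments(3)[OF t_le])
  from terminal_freeze(2)[of "{..<t}" t G "\<lambda>_ v. v\<^sup>2", OF _ t_le G sq_meas _ _ this]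
  have "integrable M (\<lambda>\<omega>. (terminal t (G (restrict (\<lambda>i. P i \<omega>) {..<t})) (\<lambda>i. P i \<omega>))\<^sup>2)"
    using terminal_moments(1)[OF t_le] by simp
  then show sq: "integrable M (\<lambda>\<omega>. (Y T \<omega>)\<^sup>2)"
    by (rule Bochner_Integration.integrable_cong[THEN iffD1, rotated 2]) (simp_all add: YG deviation_terminal)
  have "Y T \<in> borel_measurable M"
    using terminal_measurable_returns[OF deviation_measurable]
    by (simp add: deviation_terminal cong: measurable_cong)
  then show "integrable M (Y T)"
    by (rule square_integrable_imp_integrable[OF _ sq])
qed

lemma conditional_mean:
  "AE \<omega> in M. real_cond_exp M sigma_Yt (Y T) \<omega> = cmean t (Y t \<omega>)"
proof -
  interpret S: finite_measure_subalgebra M sigma_Yt by (rule sigma_Yt_subalgebra)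
  show ?thesis
  proof (rule S.real_cond_exp_charact)
    show "(\<integral>\<omega>\<in>A. Y T \<omega> \<partial>M) = (\<integral>\<omega>\<in>A. cmean t (Y t \<omega>) \<partial>M)" if "A \<in> sets sigma_Yt" for A
      using set_integral_terminal[of "\<lambda>v. v", OF _ _ that] terminal_deviation_integrable(2)
      by (simp add: terminal_moments(2)[OF t_le])
    have "integrable M (Y t)"
      by (rule square_integrable_imp_integrable[OF deviation_measurable deviation_square_integrable])
    then show "integrable M (\<lambda>\<omega>. cmean t (Y t \<omega>))" by (rule cmean_integrable)
    show "integrable M (Y T)" by (rule terminal_deviation_integrable(2))
    show "(\<lambda>\<omega>. cmean t (Y t \<omega>)) \<in> borel_measurable sigma_Yt"
      using deviation_sigma_Yt_measurable by measurable
  qed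
qed

lemma conditional_second_moment:
  "AE \<omega> in M. real_cond_exp M sigma_Yt (\<lambda>\<omega>. (Y T \<omega>)\<^sup>2) \<omega> = csecond t (Y t \<omega>)"
proof -
  interpret S: finite_measure_subalgebra M sigma_Yt by (rule sigma_Yt_subalgebra)
  show ?thesis
  proof (rule S.real_cond_exp_charact)
    show "(\<integral>\<omega>\<in>A. (Y T \<omega>)\<^sup>2 \<partial>M) = (\<integral>\<omega>\<in>A. csecond t (Y t \<omega>) \<partial>M)" if "A \<in> sets sigma_Yt" for A
      using set_integral_terminal[of "\<lambda>v. v\<^sup>2", OF _ _ that] terminal_deviation_integrable(1)
      by (simp add: terminal_moments(3)[OF t_le])
    show "integrable M (\<lambda>\<omega>. csecond t (Y t \<omega>))"
      by (rule csecond_integrable[OF deviation_measurable deviation_square_integrable])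
    show "integrable M (\<lambda>\<omega>. (Y T \<omega>)\<^sup>2)" by (rule terminal_deviation_integrable(1))
    show "(\<lambda>\<omega>. csecond t (Y t \<omega>)) \<in> borel_measurable sigma_Yt"
      using deviation_sigma_Yt_measurable by measurable
  qed
qed

text \<open>The conditional variance of terminal wealth: shifting by the constant target \<open>W\<close> changes neither
  the conditioning \<open>\<sigma>\<close>-algebra nor the conditional variance.\<close>
lemma conditional_variance:
  "AE \<omega> in M. cond_var M (vimage_algebra (space M) (X t) borel) (X T) \<omega>
     = ((bp t - (ap t)\<^sup>2) * (if 0 \<le> Y t \<omega> then 1 else 0)
        + (bm t - (am t)\<^sup>2) * (if Y t \<omega> < 0 then 1 else 0)) * (Y t \<omega>)\<^sup>2"
proof -
  interpret S: finite_measure_subalgebra M sigma_Yt by (rule sigma_Yt_subalgebra)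
  have sigma_X: "vimage_algebra (space M) (X t) borel = sigma_Yt"
    using vimage_algebra_add_const[of "space M" "Y t" "W / \<rho> t"] by (simp add: Y_def)
  have XT: "X T = (\<lambda>\<omega>. Y T \<omega> + W)"
    by (simp add: Y_def rho_def fun_eq_iff)
  have "AE \<omega> in M. cond_var M sigma_Yt (\<lambda>\<omega>. Y T \<omega> + W) \<omega> = cond_var M sigma_Yt (Y T) \<omega>"
    by (rule S.cond_var_add_const[OF terminal_deviation_integrable(2,1)])
  with conditional_mean conditional_second_moment show ?thesis
    unfolding sigma_X XT
    by eventually_elim (simp add: cond_var_def csecond_minus_cmean_sq[symmetric])
qed

end

theorem mainTheorem3:
  fixes M :: "'a measure"
    and T :: nat
    and s :: "nat \<Rightarrow> real"
    and P :: "nat \<Rightarrow> 'a \<Rightarrow> real^'n"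
    and \<rho> :: "nat \<Rightarrow> real"
    and gp gm :: "nat \<Rightarrow> real"
    and Kp Km :: "nat \<Rightarrow> real^'n"
    and ap am bp bm :: "nat \<Rightarrow> real"
    and x0 W :: real
    and X :: "nat \<Rightarrow> 'a \<Rightarrow> real"
    and Y :: "nat \<Rightarrow> 'a \<Rightarrow> real"
    and u :: "nat \<Rightarrow> 'a \<Rightarrow> real^'n"
    and t :: nat
  assumes M: "prob_space M"
    and s_gt1: "\<And>j. j < T \<Longrightarrow> s j > 1"
    and P_meas: "\<And>j. j < T \<Longrightarrow> P j \<in> borel_measurable M"
    and P_indep: "prob_space.indep_vars M (\<lambda>_. borel) P {..<T}"
    and P_ac: "\<And>j. j < T \<Longrightarrow> absolutely_continuous lborel (distr M borel (P j))"
    and P_int1: "\<And>j. j < T \<Longrightarrow> integrable M (P j)"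
    and P_int2: "\<And>j. j < T \<Longrightarrow> integrable M (\<lambda>\<omega>. (norm (P j \<omega>))\<^sup>2)"
    and P_cov_pd: "\<And>j L. j < T \<Longrightarrow> L \<noteq> 0 \<Longrightarrow> L \<bullet> (cov_mat M (P j) *v L) > 0"
    and no_arb: "\<And>j L. j < T \<Longrightarrow> L \<noteq> 0 \<Longrightarrow>
        \<not> (AE \<omega> in M. P j \<omega> \<bullet> L \<le> 0) \<and> \<not> (AE \<omega> in M. P j \<omega> \<bullet> L \<ge> 0)"
    and rho_def: "\<And>j. \<rho> j = (\<Prod>i\<in>{j..<T}. s i)"
    and gp_nn: "\<And>j. gp j \<ge> 0"
    and gm_nn: "\<And>j. gm j \<ge> 0"
    and aT: "ap T = 0" "am T = 0"
    and bT: "bp T = 0" "bm T = 0"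
    and Kp_min: "\<And>j L. j < T \<Longrightarrow>
        F_plus M (P j) (s j) (\<rho> (Suc j)) (ap (Suc j)) (am (Suc j)) (bp (Suc j)) (bm (Suc j)) (gp j) (Kp j)
        \<le> F_plus M (P j) (s j) (\<rho> (Suc j)) (ap (Suc j)) (am (Suc j)) (bp (Suc j)) (bm (Suc j)) (gp j) L"
    and Km_min: "\<And>j L. j < T \<Longrightarrow>
        F_minus M (P j) (s j) (\<rho> (Suc j)) (ap (Suc j)) (am (Suc j)) (bp (Suc j)) (bm (Suc j)) (gm j) (Km j)
        \<le> F_minus M (P j) (s j) (\<rho> (Suc j)) (ap (Suc j)) (am (Suc j)) (bp (Suc j)) (bm (Suc j)) (gm j) L"
    and ap_rec: "\<And>j. j < T \<Longrightarrow> ap j =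
        \<rho> (Suc j) * (mean_vec M (P j) \<bullet> Kp j)
        + integral\<^sup>L M (\<lambda>\<omega>. ap (Suc j) * (s j + P j \<omega> \<bullet> Kp j)
              * (if s j + P j \<omega> \<bullet> Kp j \<ge> 0 then 1 else 0))
        + integral\<^sup>L M (\<lambda>\<omega>. am (Suc j) * (s j + P j \<omega> \<bullet> Kp j)
              * (if s j + P j \<omega> \<bullet> Kp j < 0 then 1 else 0))"
    and am_rec: "\<And>j. j < T \<Longrightarrow> am j =
        \<rho> (Suc j) * (mean_vec M (P j) \<bullet> Km j)
        + integral\<^sup>L M (\<lambda>\<omega>. ap (Suc j) * (s j + P j \<omega> \<bullet> Km j)
              * (if s j + P j \<omega> \<bullet> Km j \<le> 0 then 1 else 0))
        + integral\<^sup>L M (\<lambda>\<omega>. am (Suc j) * (s j + P j \<omega> \<bullet> Km j)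
              * (if s j + P j \<omega> \<bullet> Km j > 0 then 1 else 0))"
    and bp_rec: "\<And>j. j < T \<Longrightarrow> bp j =
        (\<rho> (Suc j))\<^sup>2 * (Kp j \<bullet> (smom_mat M (P j) *v Kp j))
        + 2 * \<rho> (Suc j) * integral\<^sup>L M (\<lambda>\<omega>. ap (Suc j) * (s j + P j \<omega> \<bullet> Kp j) * (P j \<omega> \<bullet> Kp j)
              * (if s j + P j \<omega> \<bullet> Kp j \<ge> 0 then 1 else 0))
        + 2 * \<rho> (Suc j) * integral\<^sup>L M (\<lambda>\<omega>. am (Suc j) * (s j + P j \<omega> \<bullet> Kp j) * (P j \<omega> \<bullet> Kp j)
              * (if s j + P j \<omega> \<bullet> Kp j < 0 then 1 else 0))
        + integral\<^sup>L M (\<lambda>\<omega>. bp (Suc j) * (s j + P j \<omega> \<bullet> Kp j)\<^sup>2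
              * (if s j + P j \<omega> \<bullet> Kp j \<ge> 0 then 1 else 0))
        + integral\<^sup>L M (\<lambda>\<omega>. bm (Suc j) * (s j + P j \<omega> \<bullet> Kp j)\<^sup>2
              * (if s j + P j \<omega> \<bullet> Kp j < 0 then 1 else 0))"
    and bm_rec: "\<And>j. j < T \<Longrightarrow> bm j =
        (\<rho> (Suc j))\<^sup>2 * (Km j \<bullet> (smom_mat M (P j) *v Km j))
        + 2 * \<rho> (Suc j) * integral\<^sup>L M (\<lambda>\<omega>. ap (Suc j) * (s j + P j \<omega> \<bullet> Km j) * (P j \<omega> \<bullet> Km j)
              * (if s j + P j \<omega> \<bullet> Km j \<le> 0 then 1 else 0))
        + 2 * \<rho> (Suc j) * integral\<^sup>L M (\<lambda>\<omega>. am (Suc j) * (s j + P j \<omega> \<bullet> Km j) * (P j \<omega> \<bullet> Km j)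
              * (if s j + P j \<omega> \<bullet> Km j > 0 then 1 else 0))
        + integral\<^sup>L M (\<lambda>\<omega>. bp (Suc j) * (s j + P j \<omega> \<bullet> Km j)\<^sup>2
              * (if s j + P j \<omega> \<bullet> Km j \<le> 0 then 1 else 0))
        + integral\<^sup>L M (\<lambda>\<omega>. bm (Suc j) * (s j + P j \<omega> \<bullet> Km j)\<^sup>2
              * (if s j + P j \<omega> \<bullet> Km j > 0 then 1 else 0))"
    and X0: "\<And>\<omega>. \<omega> \<in> space M \<Longrightarrow> X 0 \<omega> = x0"
    and X_step: "\<And>j \<omega>. j < T \<Longrightarrow> \<omega> \<in> space M \<Longrightarrow>
        X (Suc j) \<omega> = s j * X j \<omega> + P j \<omega> \<bullet> u j \<omega>"
    and Y_def: "\<And>j \<omega>. Y j \<omega> = X j \<omega> - W / \<rho> j"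
    and u_early_adapted: "\<And>j. j < t \<Longrightarrow> \<exists>g \<in> borel_measurable (PiM {..<j} (\<lambda>_. borel)).
        \<forall>\<omega> \<in> space M. u j \<omega> = g (\<lambda>i \<in> {..<j}. P i \<omega>)"
    and u_early_L2: "\<And>j. j < t \<Longrightarrow> integrable M (\<lambda>\<omega>. (norm (u j \<omega>))\<^sup>2)"
    and u_policy: "\<And>j \<omega>. t \<le> j \<Longrightarrow> j < T \<Longrightarrow> \<omega> \<in> space M \<Longrightarrow>
        u j \<omega> = (Y j \<omega> * (if Y j \<omega> \<ge> 0 then 1 else 0)) *\<^sub>R Kp j
               + (Y j \<omega> * (if Y j \<omega> < 0 then 1 else 0)) *\<^sub>R Km j"
    and t_le: "t \<le> T"
  shows "(AE \<omega> in M. real_cond_exp M (vimage_algebra (space M) (Y t) borel) (Y T) \<omega>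
           = \<rho> t * Y t \<omega> + ap t * Y t \<omega> * (if Y t \<omega> \<ge> 0 then 1 else 0)
             + am t * Y t \<omega> * (if Y t \<omega> < 0 then 1 else 0))
    \<and> (AE \<omega> in M. real_cond_exp M (vimage_algebra (space M) (Y t) borel) (\<lambda>x. (Y T x)\<^sup>2) \<omega>
           = (\<rho> t)\<^sup>2 * (Y t \<omega>)\<^sup>2
             + (2 * \<rho> t * ap t + bp t) * (Y t \<omega>)\<^sup>2 * (if Y t \<omega> \<ge> 0 then 1 else 0)
             + (2 * \<rho> t * am t + bm t) * (Y t \<omega>)\<^sup>2 * (if Y t \<omega> < 0 then 1 else 0))
    \<and> (AE \<omega> in M. cond_var M (vimage_algebra (space M) (X t) borel) (X T) \<omega>
           = ((bp t - (ap t)\<^sup>2) * (if Y t \<omega> \<ge> 0 then 1 else 0)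
              + (bm t - (am t)\<^sup>2) * (if Y t \<omega> < 0 then 1 else 0)) * (Y t \<omega>)\<^sup>2)"
proof -
  have s_pos: "\<And>j. j < T \<Longrightarrow> 0 < s j"
    using s_gt1 by (meson less_trans zero_less_one)
  interpret mv_wealth M T s P \<rho> Kp Km ap am bp bm x0 W X Y u t
    by (intro mv_wealth.intro mv_closed_loop.intro mv_recursion.intro
        mv_closed_loop_axioms.intro mv_wealth_axioms.intro) (fact assms s_pos)+
  show ?thesis
    using conditional_mean conditional_second_moment conditional_variance
    unfolding cmean_def csecond_def by blast
qed

end
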